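(* Let $W$ be a linear space over $\mathbb{K}\in\{\mathbb{R},\mathbb{C}\}$, let $0<q\le 1$, let $V\neq\{0\}$ be a $W$-spreading $q$-space, let $\Omega$ be a nonempty set and let $A$ be an $(\Omega,V)$-stable function space. Let $\mathcal{N}=\{f\in A: f \text{ is not injective}\}$. Then either $\mathcal{N}=\{0\}$ or $\mathcal{N}$ is pointwise spaceable in $A$, i.e., for every $f\in\mathcal{N}$ there is a closed $\mathfrak{c}$-dimensional (in particular infinite dimensional) linear subspace $X$ of $A$ with $f\in X\subseteq\mathcal{N}$.
   Context: For $0<q\le 1$, a $q$-norm on a linear space $X$ is a map $\|\cdot\|\colon X\to[0,\infty)$ with $\|x\|=0$ iff $x=0$, $\|\lambda x\|=|\lambda|\,\|x\|$, and $\|x+y\|^q\le\|x\|^q+\|y\|^q$; a $q$-Banach space is a space with a complete $q$-norm. $\mathfrak{c}$ is the cardinality of the continuum. A $W$-spreading $q$-space is a linear subspace $V$ of the space $W^{\mathbb{N}}$ of $W$-valued sequences (coordinatewise operations) endowed with a complete $q$-norm $\|\cdot\|_V$ such that: whenever $(a_j)_{j=1}^\infty\in V$ and $\mathbb{N}_0=\{j_1<j_2<\cdots\}$ is an infinite subset of $\mathbb{N}$, the sequence $(b_k)_{k}$ with $b_k=a_i$ if $k=j_i$ and $b_k=0$ if $k\notin\mathbb{N}_0$ belongs to $V$ and $\|(b_k)_k\|_V\le\|(a_j)_j\|_V$. For a nonempty set $\Omega$ and a $q$-Banach space $F$, an $(\Omega,F)$-stable function space is a linear subspace $A\neq\{0\}$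 of the space $F^\Omega$ of all maps $\Omega\to F$ (pointwise operations), endowed with a complete $q$-norm $\|\cdot\|_A$, such that: (i) the topology induced by $\|\cdot\|_A$ contains (is finer than) the topology of pointwise convergence on $A$; (ii) for every $g\in A$ and every bounded linear operator $u\colon F\to F$, one has $u\circ g\in A$ and $\|u\circ g\|_A\le\|u\|\,\|g\|_A$. *)

theory Defs
  imports "HOL-Analysis.Analysis" "HOL-Library.Function_Algebras" "HOL-Library.Equipollence"
begin

definition seq_scale :: "('k \<Rightarrow> 'w \<Rightarrow> 'w) \<Rightarrow> 'k \<Rightarrow> (nat \<Rightarrow> 'w) \<Rightarrow> (nat \<Rightarrow> 'w)" where
  "seq_scale s c x = (\<lambda>j. s c (x j))"

definition fun_scale :: "('k \<Rightarrow> 'v \<Rightarrow> 'v) \<Rightarrow> 'k \<Rightarrow> ('o \<Rightarrow> 'v) \<Rightarrow> ('o \<Rightarrow> 'v)" where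
  "fun_scale s c f = (\<lambda>\<omega>. s c (f \<omega>))"

definition linear_subspace :: "('k \<Rightarrow> 'v::ab_group_add \<Rightarrow> 'v) \<Rightarrow> 'v set \<Rightarrow> bool" where
  "linear_subspace s X \<longleftrightarrow> 0 \<in> X \<and> (\<forall>x\<in>X. \<forall>y\<in>X. x + y \<in> X) \<and> (\<forall>c. \<forall>x\<in>X. s c x \<in> X)"

definition is_qnorm :: "real \<Rightarrow> ('k::real_normed_field \<Rightarrow> 'v::ab_group_add \<Rightarrow> 'v) \<Rightarrow> 'v set \<Rightarrow> ('v \<Rightarrow> real) \<Rightarrow> bool" where
  "is_qnorm q s X n \<longleftrightarrow>
     (\<forall>x\<in>X. 0 \<le> n x \<and> (n x = 0 \<longleftrightarrow> x = 0)) \<and>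
     (\<forall>c. \<forall>x\<in>X. n (s c x) = norm c * n x) \<and>
     (\<forall>x\<in>X. \<forall>y\<in>X. n (x + y) powr q \<le> n x powr q + n y powr q)"

text \<open>Completeness of a q-norm (Cauchy sequences for d(x,y) = n(x-y)^q, equivalently
for n(x-y), converge).\<close>

definition qnorm_complete :: "'v::ab_group_add set \<Rightarrow> ('v \<Rightarrow> real) \<Rightarrow> bool" where
  "qnorm_complete X n \<longleftrightarrow>
     (\<forall>x::nat \<Rightarrow> 'v. (\<forall>m. x m \<in> X) \<longrightarrow>
        (\<forall>e>0. \<exists>N. \<forall>m\<ge>N. \<forall>p\<ge>N. n (x m - x p) < e) \<longrightarrow>
        (\<exists>y\<in>X. (\<lambda>m. n (x m - y)) \<longlonglongrightarrow> 0))"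

definition complete_qnorm :: "real \<Rightarrow> ('k::real_normed_field \<Rightarrow> 'v::ab_group_add \<Rightarrow> 'v) \<Rightarrow> 'v set \<Rightarrow> ('v \<Rightarrow> real) \<Rightarrow> bool" where
  "complete_qnorm q s X n \<longleftrightarrow> is_qnorm q s X n \<and> qnorm_complete X n"

definition qnorm_topology :: "'v::ab_group_add set \<Rightarrow> ('v \<Rightarrow> real) \<Rightarrow> 'v topology" where
  "qnorm_topology X n = topology (\<lambda>U. U \<subseteq> X \<and> (\<forall>x\<in>U. \<exists>e>0. \<forall>y\<in>X. n (y - x) < e \<longrightarrow> y \<in> U))"

text \<open>W-spreading q-space (W given by its scalar multiplication sW; sequences indexed by nat).\<close>

definition spreading_qspace :: "('k::real_normed_field \<Rightarrow> 'w::ab_group_add \<Rightarrow> 'w) \<Rightarrow> real \<Rightarrow> (nat \<Rightarrow> 'w) set \<Rightarrow> ((nat \<Rightarrow> 'w) \<Rightarrow> real) \<Rightarrow> bool" where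
  "spreading_qspace sW q V nV \<longleftrightarrow>
     linear_subspace (seq_scale sW) V \<and> complete_qnorm q (seq_scale sW) V nV \<and>
     (\<forall>a\<in>V. \<forall>N0::nat set. infinite N0 \<longrightarrow>
        (\<forall>b. (\<forall>i. b (Infinite_Set.enumerate N0 i) = a i) \<and> (\<forall>k. k \<notin> N0 \<longrightarrow> b k = 0)
             \<longrightarrow> b \<in> V \<and> nV b \<le> nV a))"

definition bounded_op :: "('k \<Rightarrow> 'v::ab_group_add \<Rightarrow> 'v) \<Rightarrow> 'v set \<Rightarrow> ('v \<Rightarrow> real) \<Rightarrow> ('v \<Rightarrow> 'v) \<Rightarrow> bool" where
  "bounded_op s F nF u \<longleftrightarrow>
     (\<forall>x\<in>F. u x \<in> F) \<and> (\<forall>x\<in>F. \<forall>y\<in>F. u (x + y) = u x + u y) \<and>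
     (\<forall>c. \<forall>x\<in>F. u (s c x) = s c (u x)) \<and> (\<exists>C. \<forall>x\<in>F. nF (u x) \<le> C * nF x)"

definition op_norm :: "'v set \<Rightarrow> ('v \<Rightarrow> real) \<Rightarrow> ('v \<Rightarrow> 'v) \<Rightarrow> real" where
  "op_norm F nF u = Sup {nF (u x) | x. x \<in> F \<and> nF x \<le> 1}"

text \<open>(Omega,F)-stable function space, with Omega = UNIV :: 'o set (any nonempty set is a type).
F is given by its carrier, scalar multiplication sF and q-norm nF.\<close>

definition stable_function_space :: "('k::real_normed_field \<Rightarrow> 'v::ab_group_add \<Rightarrow> 'v) \<Rightarrow> real \<Rightarrow> 'v set \<Rightarrow> ('v \<Rightarrow> real)
     \<Rightarrow> ('o \<Rightarrow> 'v) set \<Rightarrow> (('o \<Rightarrow> 'v) \<Rightarrow> real) \<Rightarrow> bool" where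
  "stable_function_space sF q F nF A nA \<longleftrightarrow>
     A \<subseteq> {f. \<forall>\<omega>. f \<omega> \<in> F} \<and> A \<noteq> {0} \<and>
     linear_subspace (fun_scale sF) A \<and> complete_qnorm q (fun_scale sF) A nA \<and>
     (\<forall>U. openin (subtopology (product_topology (\<lambda>_. qnorm_topology F nF) UNIV) A) U
          \<longrightarrow> openin (qnorm_topology A nA) U) \<and>
     (\<forall>g\<in>A. \<forall>u. bounded_op sF F nF u \<longrightarrow> u \<circ> g \<in> A \<and> nA (u \<circ> g) \<le> op_norm F nF u * nA g)"

definition pointwise_spaceable :: "('k::field \<Rightarrow> 'v::ab_group_add \<Rightarrow> 'v) \<Rightarrow> 'v set \<Rightarrow> ('v \<Rightarrow> real) \<Rightarrow> 'v set \<Rightarrow> bool" where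
  "pointwise_spaceable s A nA N \<longleftrightarrow>
     (\<forall>f\<in>N. \<exists>X. linear_subspace s X \<and> X \<subseteq> A \<and> closedin (qnorm_topology A nA) X \<and>
        f \<in> X \<and> X \<subseteq> N \<and>
        (\<exists>B. B \<subseteq> X \<and> \<not> module.dependent s B \<and> module.span s B = X \<and> B \<approx> (UNIV :: real set)))"

end

(*
  Let h be a nonzero, non-injective function in A, say h \<omega>1 = h \<omega>2 with \<omega>1 \<noteq> \<omega>2.
  The spreading property makes the operators spread k, which copy a sequence onto the k-th
  of infinitely many disjoint infinite blocks of indices, bounded of norm at most one on V;
  so the functions spread k \<circ> h lie in A, are linearly independent (disjoint supports) and,
  like h, identify \<omega>1 and \<omega>2. Since convergence in A implies pointwise convergence,
  every element of the closed span X of h and these functions identifies \<omega>1 and \<omega>2.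

  X is the closure of a countably spanned subspace, so it has at most continuum many
  elements. Conversely, a quantitative Riesz lemma gives vectors x_k in X with q-norm
  about 2^(-k^2) that stay far from the span of the previous ones. Summing them over an
  almost disjoint family of continuum many sets of indices gives linearly independent
  vectors: in a vanishing finite combination, a large index lying in just one of the sets
  produces a term that dominates everything after it. Hence every Hamel basis of X has
  the cardinality of the continuum.
*)
theory Submission
  imports Defs
begin

section \<open>q-normed spaces and their topology\<close>

lemma (in module) linear_subspace_iff_subspace: "linear_subspace scale X \<longleftrightarrow> subspace X"
  by (simp add: linear_subspace_def subspace_def)

lemma openin_qnorm_topology:
  "openin (qnorm_topology E n) U \<longleftrightarrow> U \<subseteq> E \<and> (\<forall>x\<in>U. \<exists>e>0. \<forall>y\<in>E. n (y - x) < e \<longrightarrow> y \<in> U)"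
proof -
  define P where "P U \<longleftrightarrow> U \<subseteq> E \<and> (\<forall>x\<in>U. \<exists>e>0. \<forall>y\<in>E. n (y - x) < e \<longrightarrow> y \<in> U)" for U
  have "istopology P"
    unfolding istopology_def
  proof (intro conjI allI impI)
    fix S T assume "P S" "P T"
    then show "P (S \<inter> T)"
      unfolding P_def by (metis (no_types, lifting) IntE IntI le_infI1 min_less_iff_conj)
  next
    fix K assume "\<forall>U\<in>K. P U"
    then show "P (\<Union>K)"
      unfolding P_def by (meson UnionE UnionI Union_least)
  qed
  then show ?thesis
    unfolding qnorm_topology_def P_def[symmetric] by simp
qed

lemma topspace_qnorm_topology [simp]: "topspace (qnorm_topology E n) = E"
proof
  show "topspace (qnorm_topology E n) \<subseteq> E"
    using openin_topspace[of "qnorm_topology E n"] unfolding openin_qnorm_topology by blast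
  have "openin (qnorm_topology E n) E"
    unfolding openin_qnorm_topology by (blast intro: zero_less_one)
  then show "E \<subseteq> topspace (qnorm_topology E n)" by (rule openin_subset)
qed

locale q_normed_space = vector_space s
  for s :: "'a::{real_normed_field,heine_borel} \<Rightarrow> 'b::ab_group_add \<Rightarrow> 'b" +
  fixes q :: real and E :: "'b set" and n :: "'b \<Rightarrow> real"
  assumes subspace_E: "subspace E" and qnorm: "is_qnorm q s E n" and q_pos: "0 < q"
begin

lemmas E_add = subspace_add[OF subspace_E]
  and E_diff = subspace_diff[OF subspace_E]
  and E_scale = subspace_scale[OF subspace_E]
  and E_sum = subspace_sum[OF subspace_E]

lemma n_nonneg: "x \<in> E \<Longrightarrow> 0 \<le> n x"
  and n_eq_0_iff: "x \<in> E \<Longrightarrow> n x = 0 \<longleftrightarrow> x = 0"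
  and n_scale: "x \<in> E \<Longrightarrow> n (s c x) = norm c * n x"
  using qnorm by (simp_all add: is_qnorm_def)

lemma n_minus_commute: "x \<in> E \<Longrightarrow> y \<in> E \<Longrightarrow> n (x - y) = n (y - x)"
  using n_scale[of "y - x" "-1"] by (simp add: E_diff)

text \<open>By the q-triangle inequality \<open>nq (x - y)\<close> is a translation invariant metric inducing
  the topology of \<open>n\<close>; all estimates are carried out with \<open>nq\<close> rather than \<open>n\<close>.\<close>

definition nq :: "'b \<Rightarrow> real" where "nq x = n x powr q"

lemma nq_nonneg: "0 \<le> nq x"
  by (simp add: nq_def)

lemma nq_eq_0_iff: "x \<in> E \<Longrightarrow> nq x = 0 \<longleftrightarrow> x = 0"
  by (simp add: nq_def n_eq_0_iff)

lemma nq_0 [simp]: "nq 0 = 0"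
  by (simp add: nq_eq_0_iff subspace_0 subspace_E)

lemma nq_add: "x \<in> E \<Longrightarrow> y \<in> E \<Longrightarrow> nq (x + y) \<le> nq x + nq y"
  using qnorm by (simp add: is_qnorm_def nq_def)

lemma nq_scale: "x \<in> E \<Longrightarrow> nq (s c x) = norm c powr q * nq x"
  by (simp add: nq_def n_scale powr_mult n_nonneg)

lemma nq_minus: "x \<in> E \<Longrightarrow> nq (- x) = nq x"
  using nq_scale[of x "-1"] by simp

lemma nq_minus_commute: "x \<in> E \<Longrightarrow> y \<in> E \<Longrightarrow> nq (x - y) = nq (y - x)"
  by (simp add: nq_def n_minus_commute)

lemma nq_triangle: "x \<in> E \<Longrightarrow> y \<in> E \<Longrightarrow> z \<in> E \<Longrightarrow> nq (x - z) \<le> nq (x - y) + nq (y - z)"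
  using nq_add[of "x - y" "y - z"] by (simp add: E_diff)

lemma nq_diff: "x \<in> E \<Longrightarrow> y \<in> E \<Longrightarrow> nq (x - y) \<le> nq x + nq y"
  using nq_triangle[of x 0 y] nq_minus_commute[of 0 y] by (simp add: subspace_0 subspace_E)

lemma nq_sum: "finite T \<Longrightarrow> (\<And>i. i \<in> T \<Longrightarrow> f i \<in> E) \<Longrightarrow> nq (sum f T) \<le> (\<Sum>i\<in>T. nq (f i))"
proof (induction T rule: finite_induct)
  case (insert i T)
  then show ?case using nq_add[of "f i" "sum f T"] E_sum[of T f] by auto
qed simp

lemma n_less_iff_nq_less: "x \<in> E \<Longrightarrow> 0 < e \<Longrightarrow> n x < e \<longleftrightarrow> nq x < e powr q"
  unfolding nq_def using q_pos n_nonneg[of x]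
    by (meson less_le_not_le powr_less_mono2 powr_mono2 less_imp_le not_le)

lemma tendsto_n_iff_nq:
  assumes "\<And>m. x m \<in> E"
  shows "(\<lambda>m. n (x m)) \<longlonglongrightarrow> 0 \<longleftrightarrow> (\<lambda>m. nq (x m)) \<longlonglongrightarrow> 0"
proof
  assume "(\<lambda>m. n (x m)) \<longlonglongrightarrow> 0"
  then show "(\<lambda>m. nq (x m)) \<longlonglongrightarrow> 0"
    unfolding nq_def by (rule tendsto_zero_powrI) (use q_pos n_nonneg assms in auto)
next
  assume "(\<lambda>m. nq (x m)) \<longlonglongrightarrow> 0"
  then have "(\<lambda>m. nq (x m) powr (1/q)) \<longlonglongrightarrow> 0"
    by (rule tendsto_zero_powrI[where b = "1/q"]) (use q_pos nq_nonneg in auto)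
  moreover have "nq (x m) powr (1/q) = n (x m)" for m
    using q_pos n_nonneg[OF assms] by (simp add: nq_def powr_powr)
  ultimately show "(\<lambda>m. n (x m)) \<longlonglongrightarrow> 0" by simp
qed

lemma openin_nq_ball:
  assumes "x \<in> E" "0 < r"
  shows "openin (qnorm_topology E n) {y\<in>E. nq (y - x) < r}"
  unfolding openin_qnorm_topology
proof (intro conjI ballI)
  fix y assume y: "y \<in> {y\<in>E. nq (y - x) < r}"
  define d where "d = r - nq (y - x)"
  have d: "0 < d" using y by (simp add: d_def)
  show "\<exists>e>0. \<forall>z\<in>E. n (z - y) < e \<longrightarrow> z \<in> {y\<in>E. nq (y - x) < r}"
  proof (intro exI[of _ "d powr (1/q)"] conjI ballI impI)
    fix z assume z: "z \<in> E" "n (z - y) < d powr (1/q)"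
    have "nq (z - y) < d"
      using n_less_iff_nq_less[of "z - y" "d powr (1/q)"] z y d q_pos
        by (simp add: E_diff powr_powr)
    then show "z \<in> {y\<in>E. nq (y - x) < r}"
      using nq_triangle[of z y x] z y assms(1) d_def by auto
  qed (use d in simp)
qed auto

lemma Hausdorff_space_qnorm_topology: "Hausdorff_space (qnorm_topology E n)"
  unfolding Hausdorff_space_def topspace_qnorm_topology
proof (intro allI impI)
  fix a b assume ab: "a \<in> E \<and> b \<in> E \<and> a \<noteq> b"
  define r where "r = nq (a - b) / 2"
  have r: "0 < r" using ab nq_eq_0_iff[of "a - b"] nq_nonneg[of "a - b"] by (simp add: r_def E_diff)
  have "disjnt {y\<in>E. nq (y - a) < r} {y\<in>E. nq (y - b) < r}"
    using nq_triangle[of a _ b] nq_minus_commute[of a] ab by (fastforce simp: disjnt_def r_def)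
  then show "\<exists>U V. openin (qnorm_topology E n) U \<and> openin (qnorm_topology E n) V \<and>
      a \<in> U \<and> b \<in> V \<and> disjnt U V"
    using openin_nq_ball[of a r] openin_nq_ball[of b r] ab r by fastforce
qed

lemma in_closure_of_iff_nq:
  assumes "S \<subseteq> E"
  shows "x \<in> qnorm_topology E n closure_of S \<longleftrightarrow> x \<in> E \<and> (\<forall>r>0. \<exists>y\<in>S. nq (y - x) < r)"
proof
  assume x: "x \<in> qnorm_topology E n closure_of S"
  then have xE: "x \<in> E" by (simp add: closure_of_def)
  show "x \<in> E \<and> (\<forall>r>0. \<exists>y\<in>S. nq (y - x) < r)"
  proof (intro conjI allI impI xE)
    fix r :: real assume "0 < r"
    then have "openin (qnorm_topology E n) {y\<in>E. nq (y - x) < r}" "x \<in> {y\<in>E. nq (y - x) < r}"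
      using openin_nq_ball[OF xE] xE by auto
    then obtain y where "y \<in> S" "y \<in> {y\<in>E. nq (y - x) < r}"
      using x unfolding in_closure_of by meson
    then show "\<exists>y\<in>S. nq (y - x) < r" by blast
  qed
next
  assume x: "x \<in> E \<and> (\<forall>r>0. \<exists>y\<in>S. nq (y - x) < r)"
  show "x \<in> qnorm_topology E n closure_of S"
    unfolding closure_of_def topspace_qnorm_topology
  proof (intro CollectI conjI allI impI)
    show "x \<in> E" using x by simp
    fix T assume T: "x \<in> T \<and> openin (qnorm_topology E n) T"
    then obtain e where e: "0 < e" "\<forall>y\<in>E. n (y - x) < e \<longrightarrow> y \<in> T"
      unfolding openin_qnorm_topology by blast
    have "0 < e powr q" using e by simp
    then obtain y where y: "y \<in> S" "nq (y - x) < e powr q" using x by blast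
    have "y \<in> E" using y(1) assms by blast
    then have "n (y - x) < e" using n_less_iff_nq_less[of "y - x" e] e(1) y(2) x
      by (simp add: E_diff)
    then show "\<exists>y\<in>S. y \<in> T" using e(2) \<open>y \<in> E\<close> y(1) by blast
  qed
qed

lemma in_closure_of_iff_seq:
  assumes "S \<subseteq> E"
  shows "x \<in> qnorm_topology E n closure_of S \<longleftrightarrow>
     x \<in> E \<and> (\<exists>y. range y \<subseteq> S \<and> (\<lambda>m. nq (y m - x)) \<longlonglongrightarrow> 0)"
proof
  assume "x \<in> qnorm_topology E n closure_of S"
  then have x: "x \<in> E" "\<forall>r>0. \<exists>y\<in>S. nq (y - x) < r" using in_closure_of_iff_nq[OF assms] by auto
  have "\<forall>m. \<exists>y. y \<in> S \<and> nq (y - x) < 1 / Suc m"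
    using x(2) by (simp add: Bex_def)
  then obtain y where y: "\<And>m. y m \<in> S \<and> nq (y m - x) < 1 / Suc m"
    using choice[of "\<lambda>m y. y \<in> S \<and> nq (y - x) < 1 / Suc m"] by blast
  have "(\<lambda>m. nq (y m - x)) \<longlonglongrightarrow> 0"
  proof (rule tendsto_sandwich[of "\<lambda>_. 0" _ _ "\<lambda>m. 1 / Suc m"])
    show "\<forall>\<^sub>F m in sequentially. nq (y m - x) \<le> 1 / Suc m"
      using y by (simp add: less_imp_le)
    show "(\<lambda>m. 1 / real (Suc m)) \<longlonglongrightarrow> 0"
      using LIMSEQ_inverse_real_of_nat by (simp add: inverse_eq_divide)
  qed (auto simp: nq_nonneg)
  then show "x \<in> E \<and> (\<exists>y. range y \<subseteq> S \<and> (\<lambda>m. nq (y m - x)) \<longlonglongrightarrow> 0)"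
    using x y by blast
next
  assume "x \<in> E \<and> (\<exists>y. range y \<subseteq> S \<and> (\<lambda>m. nq (y m - x)) \<longlonglongrightarrow> 0)"
  then obtain y where x: "x \<in> E" and y: "range y \<subseteq> S" "(\<lambda>m. nq (y m - x)) \<longlonglongrightarrow> 0" by blast
  have "\<exists>z\<in>S. nq (z - x) < r" if "0 < r" for r
    using order_tendstoD(2)[OF y(2) that] y(1)
      by (meson eventually_sequentially le_refl range_subsetD)
  then show "x \<in> qnorm_topology E n closure_of S" using in_closure_of_iff_nq[OF assms] x by blast
qed

definition seq_closed :: "'b set \<Rightarrow> bool" where
  "seq_closed C \<longleftrightarrow> (\<forall>y x. range y \<subseteq> C \<longrightarrow> x \<in> E \<longrightarrow> (\<lambda>m. nq (y m - x)) \<longlonglongrightarrow> 0 \<longrightarrow> x \<in> C)"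

lemma seq_closedD:
  "seq_closed C \<Longrightarrow> range y \<subseteq> C \<Longrightarrow> x \<in> E \<Longrightarrow> (\<lambda>m. nq (y m - x)) \<longlonglongrightarrow> 0 \<Longrightarrow> x \<in> C"
  unfolding seq_closed_def by blast

lemma closedin_iff_seq_closed: "closedin (qnorm_topology E n) C \<longleftrightarrow> C \<subseteq> E \<and> seq_closed C"
proof (cases "C \<subseteq> E")
  case True
  have "qnorm_topology E n closure_of C \<subseteq> C \<longleftrightarrow> seq_closed C"
    unfolding seq_closed_def in_closure_of_iff_seq[OF True] subset_iff by blast
  then show ?thesis
    using closure_of_subset_eq[of C "qnorm_topology E n"] True by simp
qed (metis closedin_def topspace_qnorm_topology)

lemma nq_limit_unique:
  assumes "x \<in> E" "x' \<in> E" "range y \<subseteq> E"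
    and "(\<lambda>m. nq (y m - x)) \<longlonglongrightarrow> 0" "(\<lambda>m. nq (y m - x')) \<longlonglongrightarrow> 0"
  shows "x = x'"
proof -
  have "nq (x - x') \<le> nq (y m - x) + nq (y m - x')" for m
    using nq_triangle[of x "y m" x'] nq_minus_commute[of x "y m"] assms(1-3) by auto
  moreover have "(\<lambda>m. nq (y m - x) + nq (y m - x')) \<longlonglongrightarrow> 0"
    using tendsto_add[OF assms(4,5)] by simp
  ultimately have "nq (x - x') \<le> 0" by (intro LIMSEQ_le_const) auto
  then show ?thesis using nq_nonneg[of "x - x'"] nq_eq_0_iff[of "x - x'"] assms(1,2)
    by (simp add: E_diff)
qed

lemma nq_tendsto_add:
  assumes "range a \<subseteq> E" "range b \<subseteq> E" "x \<in> E" "y \<in> E"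
    and "(\<lambda>m. nq (a m - x)) \<longlonglongrightarrow> 0" "(\<lambda>m. nq (b m - y)) \<longlonglongrightarrow> 0"
  shows "(\<lambda>m. nq ((a m + b m) - (x + y))) \<longlonglongrightarrow> 0"
proof (rule tendsto_sandwich[of "\<lambda>_. 0" _ _ "\<lambda>m. nq (a m - x) + nq (b m - y)"])
  show "\<forall>\<^sub>F m in sequentially. nq ((a m + b m) - (x + y)) \<le> nq (a m - x) + nq (b m - y)"
  proof (intro always_eventually allI)
    fix m
    have "a m \<in> E" "b m \<in> E" using assms(1,2) by auto
    moreover have eq: "(a m + b m) - (x + y) = (a m - x) + (b m - y)" by (simp add: algebra_simps)
    ultimately show "nq ((a m + b m) - (x + y)) \<le> nq (a m - x) + nq (b m - y)"
      unfolding eq using assms(3,4) by (intro nq_add E_diff)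
  qed
  show "(\<lambda>m. nq (a m - x) + nq (b m - y)) \<longlonglongrightarrow> 0" using tendsto_add[OF assms(5,6)] by simp
qed (auto simp: nq_nonneg)

lemma subspace_closure_of:
  assumes "subspace S" "S \<subseteq> E"
  shows "subspace (qnorm_topology E n closure_of S)"
  unfolding subspace_def
proof (intro conjI ballI allI)
  show "0 \<in> qnorm_topology E n closure_of S"
    using closure_of_subset[of S "qnorm_topology E n"] assms subspace_0[OF assms(1)] by auto
next
  fix x y assume "x \<in> qnorm_topology E n closure_of S" "y \<in> qnorm_topology E n closure_of S"
  then obtain a b where x: "x \<in> E" "range a \<subseteq> S" "(\<lambda>m. nq (a m - x)) \<longlonglongrightarrow> 0"
    and y: "y \<in> E" "range b \<subseteq> S" "(\<lambda>m. nq (b m - y)) \<longlonglongrightarrow> 0"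
    using in_closure_of_iff_seq[OF assms(2)] by meson
  have "range a \<subseteq> E" "range b \<subseteq> E" using x(2) y(2) assms(2) by auto
  then have "(\<lambda>m. nq ((a m + b m) - (x + y))) \<longlonglongrightarrow> 0"
    using x(1) y(1) x(3) y(3) by (rule nq_tendsto_add)
  moreover have "range (\<lambda>m. a m + b m) \<subseteq> S" using x(2) y(2) subspace_add[OF assms(1)] by blast
  moreover have "x + y \<in> E" using x(1) y(1) by (rule E_add)
  ultimately show "x + y \<in> qnorm_topology E n closure_of S"
    using in_closure_of_iff_seq[OF assms(2)] by blast
next
  fix c x assume "x \<in> qnorm_topology E n closure_of S"
  then obtain a where x: "x \<in> E" "range a \<subseteq> S" "(\<lambda>m. nq (a m - x)) \<longlonglongrightarrow> 0"
    using in_closure_of_iff_seq[OF assms(2)] by meson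
  have "nq (s c (a m) - s c x) = norm c powr q * nq (a m - x)" for m
  proof -
    have "a m \<in> E" using x(2) assms(2) by auto
    then show ?thesis using nq_scale[of "a m - x" c] x(1)
      by (simp add: E_diff scale_right_diff_distrib)
  qed
  then have "(\<lambda>m. nq (s c (a m) - s c x)) \<longlonglongrightarrow> 0"
    using tendsto_mult_right_zero[OF x(3)] by simp
  moreover have "range (\<lambda>m. s c (a m)) \<subseteq> S" using x(2) subspace_scale[OF assms(1)] by blast
  moreover have "s c x \<in> E" using x(1) by (rule E_scale)
  ultimately show "s c x \<in> qnorm_topology E n closure_of S"
    using in_closure_of_iff_seq[OF assms(2)] by blast
qed

lemma nq_tendsto_lincomb:
  assumes "finite T" "\<And>t. t \<in> T \<Longrightarrow> range (y t) \<subseteq> E \<and> z t \<in> E \<and> (\<lambda>m. nq (y t m - z t)) \<longlonglongrightarrow> 0"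
  shows "(\<lambda>m. nq ((\<Sum>t\<in>T. s (c t) (y t m)) - (\<Sum>t\<in>T. s (c t) (z t)))) \<longlonglongrightarrow> 0"
proof (rule tendsto_sandwich[of "\<lambda>_. 0" _ _ "\<lambda>m. \<Sum>t\<in>T. norm (c t) powr q * nq (y t m - z t)"])
  show "\<forall>\<^sub>F m in sequentially. nq ((\<Sum>t\<in>T. s (c t) (y t m)) - (\<Sum>t\<in>T. s (c t) (z t)))
      \<le> (\<Sum>t\<in>T. norm (c t) powr q * nq (y t m - z t))"
  proof (intro always_eventually allI)
    fix m
    have yz: "y t m - z t \<in> E" if "t \<in> T" for t
      using assms(2)[OF that] by (blast intro: E_diff)
    have "(\<Sum>t\<in>T. s (c t) (y t m)) - (\<Sum>t\<in>T. s (c t) (z t)) = (\<Sum>t\<in>T. s (c t) (y t m - z t))"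
      by (simp add: sum_subtractf scale_right_diff_distrib)
    moreover have "nq (\<Sum>t\<in>T. s (c t) (y t m - z t)) \<le> (\<Sum>t\<in>T. nq (s (c t) (y t m - z t)))"
      using assms(1) yz by (intro nq_sum E_scale)
    moreover have "(\<Sum>t\<in>T. nq (s (c t) (y t m - z t))) =
        (\<Sum>t\<in>T. norm (c t) powr q * nq (y t m - z t))"
      using yz by (intro sum.cong) (simp_all add: nq_scale)
    ultimately show "nq ((\<Sum>t\<in>T. s (c t) (y t m)) - (\<Sum>t\<in>T. s (c t) (z t)))
        \<le> (\<Sum>t\<in>T. norm (c t) powr q * nq (y t m - z t))" by simp
  qed
  have "(\<lambda>m. \<Sum>t\<in>T. norm (c t) powr q * nq (y t m - z t)) \<longlonglongrightarrow> (\<Sum>t\<in>T. norm (c t) powr q * 0)"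
    using assms(2) by (intro tendsto_sum tendsto_mult tendsto_const) blast
  then show "(\<lambda>m. \<Sum>t\<in>T. norm (c t) powr q * nq (y t m - z t)) \<longlonglongrightarrow> 0" by simp
qed (auto simp: nq_nonneg)

end

section \<open>Finite-dimensional subspaces are closed\<close>

lemma inverse_tendsto_zero_along_if_unbounded:
  fixes c :: "nat \<Rightarrow> 'c::real_normed_field"
  assumes "\<not> bounded (range c)"
  shows "\<exists>r. (\<forall>k. c (r k) \<noteq> 0) \<and> (\<lambda>k. 1 / c (r k)) \<longlonglongrightarrow> 0"
proof -
  have "\<forall>k::nat. \<exists>m. real k + 1 < norm (c m)"
    using assms by (metis bounded_iff not_le rangeE rangeI)
  then obtain r where r: "\<And>k. real k + 1 < norm (c (r k))" by metis
  have "c (r k) \<noteq> 0" for k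
  proof
    assume "c (r k) = 0"
    then show False using r[of k] by (simp; linarith)
  qed
  moreover have "(\<lambda>k. 1 / c (r k)) \<longlonglongrightarrow> 0"
  proof (rule Lim_null_comparison)
    show "\<forall>\<^sub>F k in sequentially. norm (1 / c (r k)) \<le> 1 / (real k + 1)"
    proof (intro always_eventually allI)
      fix k
      show "norm (1 / c (r k)) \<le> 1 / (real k + 1)"
        using r[of k] by (simp add: norm_divide divide_simps)
    qed
    show "(\<lambda>k. 1 / (real k + 1)) \<longlonglongrightarrow> 0"
      using LIMSEQ_inverse_real_of_nat by (simp add: inverse_eq_divide add.commute)
  qed
  ultimately show ?thesis by (intro exI[of _ r] conjI allI)
qed

context q_normed_space
begin

lemma span_subset_E: "T \<subseteq> E \<Longrightarrow> span T \<subseteq> E"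
  using span_minimal[OF _ subspace_E] by blast

lemma nq_scale_tendsto_zero:
  assumes "range y \<subseteq> E" "\<And>m. nq (y m) \<le> K" "a \<longlonglongrightarrow> 0"
  shows "(\<lambda>m. nq (s (a m) (y m))) \<longlonglongrightarrow> 0"
proof (rule tendsto_sandwich[of "\<lambda>_. 0" _ _ "\<lambda>m. norm (a m) powr q * K"])
  show "\<forall>\<^sub>F m in sequentially. nq (s (a m) (y m)) \<le> norm (a m) powr q * K"
  proof (intro always_eventually allI)
    fix m
    have "y m \<in> E" using assms(1) by auto
    then show "nq (s (a m) (y m)) \<le> norm (a m) powr q * K"
      unfolding nq_scale[OF \<open>y m \<in> E\<close>] by (intro mult_left_mono assms(2)) simp
  qed
  have "(\<lambda>m. norm (a m) powr q) \<longlonglongrightarrow> 0"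
    using tendsto_norm_zero[OF assms(3)] q_pos by (intro tendsto_zero_powrI[where b = q]) auto
  then show "(\<lambda>m. norm (a m) powr q * K) \<longlonglongrightarrow> 0" by (rule tendsto_mult_left_zero)
qed (auto simp: nq_nonneg)

text \<open>Dividing by unbounded coefficients of \<open>v\<close> would exhibit \<open>v\<close> as a limit of
  elements of \<open>span L\<close>.\<close>

lemma bounded_coefficient_if_convergent:
  assumes closed: "seq_closed (span L)" and "L \<subseteq> E" "v \<in> E" "v \<notin> span L"
    and z: "\<And>m. y m - s (c m) v \<in> span L"
    and x: "x \<in> E" "(\<lambda>m. nq (y m - x)) \<longlonglongrightarrow> 0"
  shows "bounded (range c)"
proof (rule ccontr)
  assume "\<not> bounded (range c)"
  then obtain r where r: "\<And>k. c (r k) \<noteq> 0" "(\<lambda>k. 1 / c (r k)) \<longlonglongrightarrow> 0"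
    using inverse_tendsto_zero_along_if_unbounded by blast
  have yE: "y m \<in> E" for m
    using E_add[OF subsetD[OF span_subset_E[OF \<open>L \<subseteq> E\<close>] z[of m]] E_scale[OF \<open>v \<in> E\<close>, of "c m"]]
    by simp
  obtain K where K: "\<And>m. nq (y m - x) \<le> K"
    using convergent_imp_Bseq[of "\<lambda>m. nq (y m - x)"] x(2) unfolding convergent_def Bseq_def
    by (metis abs_le_D1 real_norm_def)
  have "nq (y (r k)) \<le> K + nq x" for k
    using nq_add[of "y (r k) - x" x] E_diff[OF yE x(1)] x(1) K[of "r k"] by simp
  then have "(\<lambda>k. nq (s (1 / c (r k)) (y (r k)))) \<longlonglongrightarrow> 0"
    using yE r(2) by (intro nq_scale_tendsto_zero) auto
  moreover have "nq ((- s (1 / c (r k)) (y (r k) - s (c (r k)) v)) - v) =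
      nq (s (1 / c (r k)) (y (r k)))" for k
  proof -
    have "(- s (1 / c (r k)) (y (r k) - s (c (r k)) v)) - v = - s (1 / c (r k)) (y (r k))"
      using r(1)[of k] by (simp add: scale_right_diff_distrib)
    then show ?thesis using yE by (simp add: nq_minus E_scale)
  qed
  ultimately have "(\<lambda>k. nq ((- s (1 / c (r k)) (y (r k) - s (c (r k)) v)) - v)) \<longlonglongrightarrow> 0"
    by simp
  moreover have "range (\<lambda>k. - s (1 / c (r k)) (y (r k) - s (c (r k)) v)) \<subseteq> span L"
    using z by (auto intro: span_neg span_scale)
  ultimately have "v \<in> span L" using seq_closedD[OF closed] \<open>v \<in> E\<close> by blast
  then show False using \<open>v \<notin> span L\<close> by contradiction
qed

lemma seq_closed_span_insert:
  assumes closed: "seq_closed (span L)" and "L \<subseteq> E" "v \<in> E" "v \<notin> span L"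
  shows "seq_closed (span (insert v L))"
  unfolding seq_closed_def
proof (intro allI impI)
  fix y x assume y: "range y \<subseteq> span (insert v L)" and x: "x \<in> E" "(\<lambda>m. nq (y m - x)) \<longlonglongrightarrow> 0"
  have "\<forall>m. \<exists>c. y m - s c v \<in> span L"
    using y span_breakdown_eq[of _ v L] by blast
  then obtain c where z: "\<And>m. y m - s (c m) v \<in> span L" by metis
  have yE: "y m \<in> E" for m
    using E_add[OF subsetD[OF span_subset_E[OF \<open>L \<subseteq> E\<close>] z[of m]] E_scale[OF \<open>v \<in> E\<close>, of "c m"]]
    by simp
  obtain r l where r: "strict_mono r" and l: "(c \<circ> r) \<longlonglongrightarrow> l"
    using bounded_imp_convergent_subsequence bounded_coefficient_if_convergent[OF assms z x]
      by blast
  have "(\<lambda>m. nq (y (r m) - x)) \<longlonglongrightarrow> 0"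
    using LIMSEQ_subseq_LIMSEQ[OF x(2) r] by (simp add: o_def)
  moreover have "(\<lambda>m. nq (s (l - c (r m)) v - 0)) \<longlonglongrightarrow> 0"
    using nq_scale_tendsto_zero[of "\<lambda>_. v" "nq v" "\<lambda>m. l - c (r m)"] \<open>v \<in> E\<close>
      tendsto_diff[OF tendsto_const[of l] l] by (simp add: o_def)
  ultimately have "(\<lambda>m. nq ((y (r m) + s (l - c (r m)) v) - (x + 0))) \<longlonglongrightarrow> 0"
    using yE x(1) \<open>v \<in> E\<close> by (intro nq_tendsto_add) (auto intro: E_scale subspace_0[OF subspace_E])
  moreover have "(\<lambda>m. nq ((y (r m) + s (l - c (r m)) v) - (x + 0))) =
      (\<lambda>m. nq ((y (r m) - s (c (r m)) v) - (x - s l v)))"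
    by (simp add: algebra_simps scale_left_diff_distrib)
  ultimately have lim: "(\<lambda>m. nq ((y (r m) - s (c (r m)) v) - (x - s l v))) \<longlonglongrightarrow> 0"
    by (rule back_subst[where P = "\<lambda>f. f \<longlonglongrightarrow> 0"])
  have "range (\<lambda>m. y (r m) - s (c (r m)) v) \<subseteq> span L" using z by blast
  moreover have "x - s l v \<in> E" using x(1) \<open>v \<in> E\<close> by (intro E_diff E_scale)
  ultimately have "x - s l v \<in> span L" using lim by (rule seq_closedD[OF closed])
  moreover have "span L \<subseteq> span (insert v L)" by (rule span_mono) blast
  ultimately have "x - s l v \<in> span (insert v L)" by blast
  moreover have "s l v \<in> span (insert v L)" by (rule span_scale, rule span_base) simp
  ultimately have "(x - s l v) + s l v \<in> span (insert v L)" by (rule span_add)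
  then show "x \<in> span (insert v L)" by simp
qed

lemma seq_closed_span_finite:
  assumes "finite L" "L \<subseteq> E"
  shows "seq_closed (span L)"
  using assms
proof (induction L rule: finite_induct)
  case empty
  have "x = 0" if "range y \<subseteq> span {}" "x \<in> E" "(\<lambda>m. nq (y m - x)) \<longlonglongrightarrow> 0" for y x
  proof -
    have "y = (\<lambda>_. 0)" using that(1) by auto
    then show ?thesis using nq_limit_unique[of x 0 y] that subspace_0[OF subspace_E] by simp
  qed
  then show ?case unfolding seq_closed_def by simp
next
  case (insert v L)
  then show ?case
    using seq_closed_span_insert[of L v] span_redundant[of v L] by (cases "v \<in> span L") auto
qed

end

locale q_banach_space = q_normed_space +
  assumes complete: "qnorm_complete E n"
begin

lemma nq_Cauchy_convergent:
  assumes "range x \<subseteq> E" "\<And>e. 0 < e \<Longrightarrow> \<exists>N. \<forall>m\<ge>N. \<forall>p\<ge>N. nq (x m - x p) < e"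
  shows "\<exists>y\<in>E. (\<lambda>m. nq (x m - y)) \<longlonglongrightarrow> 0"
proof -
  have "\<exists>N. \<forall>m\<ge>N. \<forall>p\<ge>N. n (x m - x p) < e" if "0 < e" for e
  proof -
    have "0 < e powr q" using that by simp
    then obtain N where "\<forall>m\<ge>N. \<forall>p\<ge>N. nq (x m - x p) < e powr q" using assms(2) by blast
    moreover have "x m - x p \<in> E" for m p using assms(1) by (simp add: E_diff range_subsetD)
    ultimately show ?thesis using n_less_iff_nq_less that by blast
  qed
  then obtain y where "y \<in> E" "(\<lambda>m. n (x m - y)) \<longlonglongrightarrow> 0"
    using complete assms(1) unfolding qnorm_complete_def by blast
  moreover have "x m - y \<in> E" for m using assms(1) \<open>y \<in> E\<close> by (simp add: E_diff range_subsetD)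
  ultimately show ?thesis using tendsto_n_iff_nq[of "\<lambda>m. x m - y"] by blast
qed

end

section \<open>Continuum many independent vectors in closed infinite-dimensional subspaces\<close>

lemma sum_half_pow_square_le: "(\<Sum>i\<in>{m..<p}. (1/2::real) ^ (i * i)) \<le> 2 * (1/2) ^ (m * m)"
proof -
  have term_le: "(1/2::real) ^ (i * i) \<le> (1/2) ^ (m * m) * (1/2) ^ (i - m)" if mi: "m \<le> i" for i
  proof -
    obtain j where i: "i = m + j" using le_Suc_ex[OF mi] by blast
    have "(m + j) * (m + j) = m * m + 2 * m * j + j * j" by (simp add: algebra_simps)
    then have "m * m + j \<le> i * i" unfolding i using le_square[of j] by linarith
    then have "(1/2::real) ^ (i * i) \<le> (1/2) ^ (m * m + j)" by (intro power_decreasing) auto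
    then show ?thesis by (simp add: power_add i)
  qed
  have "(\<Sum>i\<in>{m..<p}. (1/2::real) ^ (i * i)) \<le> (2 - 2 * (1/2) ^ (p - m)) * (1/2) ^ (m * m)"
    if "m \<le> p" for p
    using that
  proof (induction p rule: dec_induct)
    case (step p)
    have "(\<Sum>i\<in>{m..<Suc p}. (1/2::real) ^ (i * i)) = (\<Sum>i\<in>{m..<p}. (1/2) ^ (i * i)) + (1/2) ^ (p * p)"
      using step.hyps(1) by simp
    also have "\<dots> \<le> (2 - 2 * (1/2) ^ (p - m)) * (1/2) ^ (m * m) + (1/2) ^ (m * m) * (1/2) ^ (p - m)"
      using step.IH term_le[OF step.hyps(1)] by linarith
    also have "\<dots> = (2 - 2 * (1/2) ^ (Suc p - m)) * (1/2) ^ (m * m)"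
      using step.hyps(1) by (simp add: Suc_diff_le algebra_simps)
    finally show ?case .
  qed simp
  moreover have "(2 - 2 * (1/2::real) ^ (p - m)) * (1/2) ^ (m * m) \<le> 2 * (1/2) ^ (m * m)"
    by (intro mult_right_mono) auto
  ultimately show ?thesis
    by (cases "m \<le> p") (fastforce intro: order_trans, simp)
qed

text \<open>An almost disjoint family indexed by the reals: distinct reals have only finitely many
  dyadic approximations \<open>\<lfloor>t 2^k\<rfloor>\<close> in common.\<close>

definition dyadic_codes :: "real \<Rightarrow> nat set" where
  "dyadic_codes t = range (\<lambda>k. prod_encode (k, int_encode \<lfloor>t * 2 ^ k\<rfloor>))"

lemma eventually_floor_pow2_neq:
  assumes "t \<noteq> (t' :: real)"
  shows "\<forall>\<^sub>F k in sequentially. \<lfloor>t * 2 ^ k\<rfloor> \<noteq> \<lfloor>t' * 2 ^ k\<rfloor>"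
proof -
  have d: "0 < \<bar>t - t'\<bar>" using assms by simp
  obtain k0 where k0: "1 / \<bar>t - t'\<bar> < 2 ^ k0" using real_arch_pow[of 2 "1 / \<bar>t - t'\<bar>"] by auto
  have "\<lfloor>t * 2 ^ k\<rfloor> \<noteq> \<lfloor>t' * 2 ^ k\<rfloor>" if "k0 \<le> k" for k
  proof
    assume eq: "\<lfloor>t * 2 ^ k\<rfloor> = \<lfloor>t' * 2 ^ k\<rfloor>"
    have "of_int \<lfloor>t * 2 ^ k\<rfloor> \<le> t * 2 ^ k" "t * 2 ^ k < of_int \<lfloor>t * 2 ^ k\<rfloor> + 1"
      "of_int \<lfloor>t' * 2 ^ k\<rfloor> \<le> t' * 2 ^ k" "t' * 2 ^ k < of_int \<lfloor>t' * 2 ^ k\<rfloor> + 1"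
      by linarith+
    then have "\<bar>t * 2 ^ k - t' * 2 ^ k\<bar> < 1" using eq by linarith
    then have lt: "\<bar>t - t'\<bar> * 2 ^ k < 1" by (simp add: abs_mult left_diff_distrib[symmetric])
    have "(2::real) ^ k0 \<le> 2 ^ k" using that by (intro power_increasing) auto
    then have "1 / \<bar>t - t'\<bar> < 2 ^ k" using k0 by linarith
    then have "1 < \<bar>t - t'\<bar> * 2 ^ k" using d by (simp add: field_simps)
    then show False using lt by linarith
  qed
  then show ?thesis unfolding eventually_sequentially by blast
qed

lemma dyadic_codes_separate:
  assumes "finite T" "t1 \<in> T"
  shows "\<exists>N\<ge>N0. N \<in> dyadic_codes t1 \<and> (\<forall>t\<in>T - {t1}. N \<notin> dyadic_codes t)"
proof -
  have "\<forall>\<^sub>F k in sequentially. \<forall>t\<in>T - {t1}. \<lfloor>t * 2 ^ k\<rfloor> \<noteq> \<lfloor>t1 * 2 ^ k\<rfloor>"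
    using assms(1) by (intro eventually_ball_finite ballI eventually_floor_pow2_neq) auto
  with eventually_ge_at_top[of N0]
  have "\<forall>\<^sub>F k in sequentially. N0 \<le> k \<and> (\<forall>t\<in>T - {t1}. \<lfloor>t * 2 ^ k\<rfloor> \<noteq> \<lfloor>t1 * 2 ^ k\<rfloor>)"
    by (rule eventually_conj)
  then obtain K where "\<forall>k\<ge>K. N0 \<le> k \<and> (\<forall>t\<in>T - {t1}. \<lfloor>t * 2 ^ k\<rfloor> \<noteq> \<lfloor>t1 * 2 ^ k\<rfloor>)"
    unfolding eventually_sequentially by blast
  then have k: "N0 \<le> K" "\<forall>t\<in>T - {t1}. \<lfloor>t * 2 ^ K\<rfloor> \<noteq> \<lfloor>t1 * 2 ^ K\<rfloor>" by auto
  define N where "N = prod_encode (K, int_encode \<lfloor>t1 * 2 ^ K\<rfloor>)"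
  have "N0 \<le> N" unfolding N_def using le_prod_encode_1[of K "int_encode \<lfloor>t1 * 2 ^ K\<rfloor>"] k(1)
    by linarith
  moreover have "N \<in> dyadic_codes t1" unfolding N_def dyadic_codes_def by (rule rangeI)
  moreover have "N \<notin> dyadic_codes t" if "t \<in> T - {t1}" for t
  proof
    assume "N \<in> dyadic_codes t"
    then obtain k' where "N = prod_encode (k', int_encode \<lfloor>t * 2 ^ k'\<rfloor>)"
      unfolding dyadic_codes_def by blast
    then have "(K, int_encode \<lfloor>t1 * 2 ^ K\<rfloor>) = (k', int_encode \<lfloor>t * 2 ^ k'\<rfloor>)"
      unfolding N_def prod_encode_eq .
    then have "\<lfloor>t * 2 ^ K\<rfloor> = \<lfloor>t1 * 2 ^ K\<rfloor>" by (auto simp: int_encode_eq)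
    then show False using k(2) that by blast
  qed
  ultimately show ?thesis by blast
qed

locale infinite_dimensional_closed_subspace = q_banach_space +
  fixes X :: "'b set" and e :: "nat \<Rightarrow> 'b"
  assumes subspace_X: "subspace X" and X_subset_E: "X \<subseteq> E" and seq_closed_X: "seq_closed X"
    and e_in_X: "\<And>k. e k \<in> X" and e_notin_span: "\<And>k. e k \<notin> span (e ` {..<k})"
begin

definition prefix_span :: "nat \<Rightarrow> 'b set" where "prefix_span k = span (e ` {..<k})"

lemma e_in_E: "e k \<in> E"
  using e_in_X X_subset_E by blast

lemma prefix_span_subset_E: "prefix_span k \<subseteq> E"
  unfolding prefix_span_def by (rule span_subset_E) (use e_in_E in blast)

lemma prefix_span_subset_X: "prefix_span k \<subseteq> X"
  unfolding prefix_span_def using span_minimal[of "e ` {..<k}" X] subspace_X e_in_X by blast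

lemma prefix_span_mono: "k \<le> l \<Longrightarrow> prefix_span k \<subseteq> prefix_span l"
  unfolding prefix_span_def by (rule span_mono) auto

lemma e_in_prefix_span_Suc: "e k \<in> prefix_span (Suc k)"
  unfolding prefix_span_def by (rule span_base) auto

lemma closedin_prefix_span: "closedin (qnorm_topology E n) (prefix_span k)"
  unfolding closedin_iff_seq_closed prefix_span_def
  using seq_closed_span_finite[of "e ` {..<k}"] prefix_span_subset_E[unfolded prefix_span_def]
    e_in_E
  by blast

definition gap :: "nat \<Rightarrow> real" where "gap k = Inf ((\<lambda>z. n (e k - z)) ` prefix_span k)"

lemma gap_le: "z \<in> prefix_span k \<Longrightarrow> gap k \<le> n (e k - z)"
  unfolding gap_def
  by (rule cInf_lower)
    (auto intro!: bdd_belowI[of _ 0] n_nonneg E_diff e_in_E dest: subsetD[OF prefix_span_subset_E])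

lemma gap_pos: "0 < gap k"
proof (rule ccontr)
  assume "\<not> 0 < gap k"
  have "\<exists>z\<in>prefix_span k. nq (z - e k) < r" if "0 < r" for r
  proof -
    have "0 < r powr (1/q)" using that by simp
    then have "Inf ((\<lambda>z. n (e k - z)) ` prefix_span k) < r powr (1/q)"
      using \<open>\<not> 0 < gap k\<close> unfolding gap_def by linarith
    then obtain z where z: "z \<in> prefix_span k" "n (e k - z) < r powr (1/q)"
      using cInf_lessD[of "(\<lambda>z. n (e k - z)) ` prefix_span k"] span_zero
      by (auto simp: prefix_span_def)
    have "z \<in> E" using z(1) prefix_span_subset_E by blast
    then have "nq (e k - z) < r"
      using n_less_iff_nq_less[of "e k - z" "r powr (1/q)"] z(2) that q_pos
      by (simp add: E_diff e_in_E powr_powr)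
    then show ?thesis using z(1) nq_minus_commute[OF \<open>z \<in> E\<close> e_in_E[of k]]
      by (intro bexI[where x = z]) auto
  qed
  then have "e k \<in> qnorm_topology E n closure_of prefix_span k"
    using in_closure_of_iff_nq[OF prefix_span_subset_E] e_in_E by blast
  then show False
    using closedin_prefix_span[of k] e_notin_span[of k]
      by (simp add: closure_of_closedin prefix_span_def)
qed

definition near :: "nat \<Rightarrow> 'b" where
  "near k = (SOME z. z \<in> prefix_span k \<and> n (e k - z) < 2 * gap k)"

lemma near: "near k \<in> prefix_span k" "n (e k - near k) < 2 * gap k"
proof -
  have "Inf ((\<lambda>z. n (e k - z)) ` prefix_span k) < 2 * gap k"
    using gap_pos[of k] by (simp add: gap_def)
  then have "\<exists>z. z \<in> prefix_span k \<and> n (e k - z) < 2 * gap k"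
    using cInf_lessD[of "(\<lambda>z. n (e k - z)) ` prefix_span k"] span_zero
    by (auto simp: prefix_span_def)
  from someI_ex[OF this] show "near k \<in> prefix_span k" "n (e k - near k) < 2 * gap k"
    unfolding near_def by auto
qed

text \<open>The super-geometric decay of \<open>radius k ^ q = 2^(-k^2)\<close> lets every term of the series
  built from the \<open>riesz k\<close> dominate the whole tail after it.\<close>

definition radius :: "nat \<Rightarrow> real" where "radius k = ((1/2) ^ (k * k)) powr (1 / q)"

lemma radius_pos: "0 < radius k"
  by (simp add: radius_def)

lemma radius_powr: "radius k powr q = (1/2) ^ (k * k)"
  using q_pos by (simp add: radius_def powr_powr)

definition riesz :: "nat \<Rightarrow> 'b" where "riesz k = s (of_real (radius k / gap k)) (e k - near k)"

lemma riesz_in_prefix_span: "riesz k \<in> prefix_span (Suc k)"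
proof -
  have "e k - near k \<in> prefix_span (Suc k)"
    using e_in_prefix_span_Suc[of k] prefix_span_mono[of k "Suc k"] near(1)[of k]
    unfolding prefix_span_def by (meson le_SucI order_refl span_diff subsetD)
  then show ?thesis unfolding riesz_def prefix_span_def by (rule span_scale)
qed

lemma riesz_in_E: "riesz k \<in> E"
  using riesz_in_prefix_span prefix_span_subset_E by blast

lemma riesz_in_X: "riesz k \<in> X"
  using riesz_in_prefix_span prefix_span_subset_X by blast

lemma e_minus_near_in_E: "e k - near k \<in> E"
  using e_in_E near(1) prefix_span_subset_E by (blast intro: E_diff)

lemma norm_of_real_radius_gap: "norm (of_real (radius k / gap k) :: 'a) = radius k / gap k"
  using norm_of_real[of "radius k / gap k", where 'a = 'a] radius_pos[of k] gap_pos[of k] by simp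

lemma nq_riesz: "nq (riesz k) \<le> 2 powr q * (1/2) ^ (k * k)"
proof -
  have "n (riesz k) = (radius k / gap k) * n (e k - near k)"
    unfolding riesz_def n_scale[OF e_minus_near_in_E] norm_of_real_radius_gap ..
  also have "\<dots> \<le> (radius k / gap k) * (2 * gap k)"
    using near(2)[of k] radius_pos[of k] gap_pos[of k] by (intro mult_left_mono) auto
  also have "\<dots> = 2 * radius k" using gap_pos[of k] by simp
  finally have "nq (riesz k) \<le> (2 * radius k) powr q"
    unfolding nq_def using n_nonneg[OF riesz_in_E] q_pos by (intro powr_mono2) auto
  also have "\<dots> = 2 powr q * (1/2) ^ (k * k)"
    using radius_pos[of k] radius_powr[of k] by (simp add: powr_mult)
  finally show ?thesis .
qed

lemma n_riesz_lower:
  assumes "w \<in> prefix_span k" "c \<noteq> 0"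
  shows "norm c * radius k \<le> n (s c (riesz k) + w)"
proof -
  define lam where "lam = (of_real (radius k / gap k) :: 'a)"
  have "lam \<noteq> 0" using radius_pos[of k] gap_pos[of k] by (simp add: lam_def)
  then have cl: "c * lam \<noteq> 0" using assms(2) by simp
  define z where "z = near k - s (1 / (c * lam)) w"
  have z: "z \<in> prefix_span k"
    unfolding z_def using near(1) assms(1) unfolding prefix_span_def by (intro span_diff span_scale)
  have "s c (riesz k) + w = s (c * lam) ((e k - near k) + s (1 / (c * lam)) w)"
    using cl by (simp add: riesz_def lam_def scale_right_distrib)
  also have "(e k - near k) + s (1 / (c * lam)) w = e k - z"
    by (simp add: z_def algebra_simps)
  moreover have "e k - z \<in> E" using e_in_E z prefix_span_subset_E by (blast intro: E_diff)
  ultimately have "n (s c (riesz k) + w) = norm (c * lam) * n (e k - z)"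
    using n_scale by simp
  moreover have "norm (c * lam) * gap k \<le> norm (c * lam) * n (e k - z)"
    using gap_le[OF z] by (intro mult_left_mono) auto
  moreover have "norm (c * lam) * gap k = norm c * radius k"
    unfolding lam_def norm_mult norm_of_real_radius_gap using gap_pos[of k] by simp
  ultimately show ?thesis by simp
qed

lemma nq_riesz_tail:
  assumes "\<And>i. norm (b i) \<le> K"
  shows "nq (\<Sum>i\<in>{m..<p}. s (b i) (riesz i)) \<le> 2 * (2 * K) powr q * (1/2) ^ (m * m)"
proof -
  have "0 \<le> K" using assms[of 0] norm_ge_zero order_trans by blast
  have "nq (\<Sum>i\<in>{m..<p}. s (b i) (riesz i)) \<le> (\<Sum>i\<in>{m..<p}. nq (s (b i) (riesz i)))"
    by (rule nq_sum) (auto intro: E_scale riesz_in_E)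
  also have "\<dots> = (\<Sum>i\<in>{m..<p}. norm (b i) powr q * nq (riesz i))"
    by (rule sum.cong) (auto simp: nq_scale[OF riesz_in_E])
  also have "\<dots> \<le> (\<Sum>i\<in>{m..<p}. K powr q * (2 powr q * (1/2) ^ (i * i)))"
  proof (rule sum_mono)
    fix i
    show "norm (b i) powr q * nq (riesz i) \<le> K powr q * (2 powr q * (1/2) ^ (i * i))"
    proof (rule mult_mono)
      show "norm (b i) powr q \<le> K powr q" using assms[of i] q_pos by (intro powr_mono2) auto
    qed (auto simp: nq_riesz nq_nonneg)
  qed
  also have "\<dots> = (2 * K) powr q * (\<Sum>i\<in>{m..<p}. (1/2) ^ (i * i))"
    using \<open>0 \<le> K\<close> by (simp add: sum_distrib_left powr_mult mult_ac)
  also have "\<dots> \<le> (2 * K) powr q * (2 * (1/2) ^ (m * m))"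
    by (rule mult_left_mono[OF sum_half_pow_square_le]) simp
  finally show ?thesis by (simp add: mult_ac)
qed

lemma riesz_series_converges:
  assumes "\<And>i. norm (b i) \<le> K"
  shows "\<exists>y\<in>E. (\<lambda>m. nq ((\<Sum>i<m. s (b i) (riesz i)) - y)) \<longlonglongrightarrow> 0"
proof (rule nq_Cauchy_convergent)
  show "range (\<lambda>m. \<Sum>i<m. s (b i) (riesz i)) \<subseteq> E"
    by (auto intro!: E_sum E_scale riesz_in_E)
  fix r :: real assume "0 < r"
  define C where "C = 2 * (2 * K) powr q"
  have "(\<lambda>m. C * (1/2::real) ^ m) \<longlonglongrightarrow> 0"
    by (intro tendsto_mult_right_zero LIMSEQ_realpow_zero) auto
  from order_tendstoD(2)[OF this \<open>0 < r\<close>]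
  obtain N where N: "\<And>m. N \<le> m \<Longrightarrow> C * (1/2) ^ m < r"
    unfolding eventually_sequentially by blast
  have tail: "nq ((\<Sum>i<p. s (b i) (riesz i)) - (\<Sum>i<m. s (b i) (riesz i))) < r"
    if "N \<le> m" "m \<le> p" for m p
  proof -
    have "(\<Sum>i<m. s (b i) (riesz i)) + (\<Sum>i\<in>{m..<p}. s (b i) (riesz i)) = (\<Sum>i<p. s (b i) (riesz i))"
      using sum.atLeastLessThan_concat[of 0 m p] that(2) by (simp add: atLeast0LessThan)
    then have eq: "(\<Sum>i<p. s (b i) (riesz i)) - (\<Sum>i<m. s (b i) (riesz i)) =
        (\<Sum>i\<in>{m..<p}. s (b i) (riesz i))"
      by (metis add_diff_cancel_left')
    have "nq (\<Sum>i\<in>{m..<p}. s (b i) (riesz i)) \<le> C * (1/2) ^ (m * m)"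
      using nq_riesz_tail[of b K m p, OF assms] by (simp add: C_def)
    moreover have "C * (1/2::real) ^ (m * m) \<le> C * (1/2) ^ m"
      by (intro mult_left_mono power_decreasing) (auto simp: C_def le_square)
    ultimately show ?thesis unfolding eq using N[OF that(1)] by linarith
  qed
  show "\<exists>N. \<forall>m\<ge>N. \<forall>p\<ge>N. nq ((\<Sum>i<m. s (b i) (riesz i)) - (\<Sum>i<p. s (b i) (riesz i))) < r"
  proof (intro exI allI impI)
    fix m p assume "N \<le> m" "N \<le> p"
    have SE: "(\<Sum>i<k. s (b i) (riesz i)) \<in> E" for k
      by (auto intro!: E_sum E_scale riesz_in_E)
    show "nq ((\<Sum>i<m. s (b i) (riesz i)) - (\<Sum>i<p. s (b i) (riesz i))) < r"
    proof (cases "m \<le> p")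
      case True
      then show ?thesis using tail[OF \<open>N \<le> m\<close> True] nq_minus_commute[OF SE SE] by simp
    next
      case False
      then show ?thesis using tail[OF \<open>N \<le> p\<close>] by simp
    qed
  qed
qed

definition riesz_set_sum :: "nat set \<Rightarrow> 'b" where
  "riesz_set_sum M = (SOME y. y \<in> E \<and> (\<lambda>m. nq ((\<Sum>i<m. s (of_bool (i \<in> M)) (riesz i)) - y)) \<longlonglongrightarrow> 0)"

lemma riesz_set_sum:
  "riesz_set_sum M \<in> E" "(\<lambda>m. nq ((\<Sum>i<m. s (of_bool (i \<in> M)) (riesz i)) - riesz_set_sum M)) \<longlonglongrightarrow> 0"
proof -
  have "norm (of_bool (i \<in> M) :: 'a) \<le> 1" for i by simp
  then have "\<exists>y. y \<in> E \<and> (\<lambda>m. nq ((\<Sum>i<m. s (of_bool (i \<in> M)) (riesz i)) - y)) \<longlonglongrightarrow> 0"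
    using riesz_series_converges[of "\<lambda>i. of_bool (i \<in> M)" 1] by blast
  from someI_ex[OF this] show "riesz_set_sum M \<in> E"
    "(\<lambda>m. nq ((\<Sum>i<m. s (of_bool (i \<in> M)) (riesz i)) - riesz_set_sum M)) \<longlonglongrightarrow> 0"
    unfolding riesz_set_sum_def by auto
qed

lemma riesz_set_sum_in_X: "riesz_set_sum M \<in> X"
  using seq_closedD[OF seq_closed_X _ riesz_set_sum]
  by (auto intro!: subspace_sum[OF subspace_X] subspace_scale[OF subspace_X] riesz_in_X)

lemma nq_riesz_sum_lower:
  assumes bK: "\<And>i. norm (b i) \<le> K" and "N < m"
  shows "norm (b N) powr q * (1/2) ^ (N * N) - 2 * (2 * K) powr q * (1/2) ^ (Suc N * Suc N)
    \<le> nq (\<Sum>i<m. s (b i) (riesz i))"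
proof (cases "b N = 0")
  case True
  have "0 \<le> 2 * (2 * K) powr q * (1/2::real) ^ (Suc N * Suc N)" by simp
  moreover have "norm (b N) powr q * (1/2) ^ (N * N) = 0" using True by simp
  ultimately show ?thesis using nq_nonneg[of "\<Sum>i<m. s (b i) (riesz i)"] by linarith
next
  case False
  define H where "H = (\<Sum>i<N. s (b i) (riesz i))"
  define R where "R = (\<Sum>i\<in>{Suc N..<m}. s (b i) (riesz i))"
  have H: "H \<in> prefix_span N"
    unfolding H_def prefix_span_def
  proof (intro span_sum span_scale)
    fix i assume "i \<in> {..<N}"
    then show "riesz i \<in> span (e ` {..<N})"
      using riesz_in_prefix_span[of i] prefix_span_mono[of "Suc i" N]
        by (auto simp: prefix_span_def)
  qed
  have RE: "R \<in> E" unfolding R_def by (intro E_sum E_scale riesz_in_E)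
  have SE: "(\<Sum>i<m. s (b i) (riesz i)) \<in> E" by (intro E_sum E_scale riesz_in_E)
  have "(\<Sum>i<m. s (b i) (riesz i)) = (\<Sum>i<Suc N. s (b i) (riesz i)) + R"
    unfolding R_def using sum.atLeastLessThan_concat[of 0 "Suc N" m "\<lambda>i. s (b i) (riesz i)"] \<open>N < m\<close>
    by (simp add: atLeast0LessThan)
  then have split: "s (b N) (riesz N) + H = (\<Sum>i<m. s (b i) (riesz i)) - R"
    by (simp add: H_def algebra_simps)
  have "(norm (b N) * radius N) powr q \<le> nq (s (b N) (riesz N) + H)"
    unfolding nq_def using n_riesz_lower[OF H False] q_pos radius_pos[of N]
    by (intro powr_mono2) auto
  moreover have "(norm (b N) * radius N) powr q = norm (b N) powr q * (1/2) ^ (N * N)"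
    using radius_powr[of N] radius_pos[of N] by (simp add: powr_mult)
  moreover have "nq (s (b N) (riesz N) + H) \<le> nq (\<Sum>i<m. s (b i) (riesz i)) + nq R"
    unfolding split by (rule nq_diff[OF SE RE])
  moreover have "nq R \<le> 2 * (2 * K) powr q * (1/2) ^ (Suc N * Suc N)"
    unfolding R_def by (rule nq_riesz_tail[OF bK])
  ultimately show ?thesis by linarith
qed


lemma nq_riesz_lincomb_tendsto_zero:
  assumes "finite T" "(\<Sum>t\<in>T. s (c t) (riesz_set_sum (M t))) = 0"
  shows "(\<lambda>m. nq (\<Sum>i<m. s (\<Sum>t\<in>T. c t * of_bool (i \<in> M t)) (riesz i))) \<longlonglongrightarrow> 0"
proof -
  have "(\<lambda>m. nq ((\<Sum>t\<in>T. s (c t) (\<Sum>i<m. s (of_bool (i \<in> M t)) (riesz i))) - 0)) \<longlonglongrightarrow> 0"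
    unfolding assms(2)[symmetric] using assms(1) riesz_set_sum
    by (intro nq_tendsto_lincomb) (auto intro!: E_sum E_scale riesz_in_E)
  moreover have "(\<Sum>t\<in>T. s (c t) (\<Sum>i<m. s (of_bool (i \<in> M t)) (riesz i))) =
      (\<Sum>i<m. s (\<Sum>t\<in>T. c t * of_bool (i \<in> M t)) (riesz i))" for m
    by (simp add: scale_sum_right scale_sum_left sum.swap[of _ T])
  ultimately show ?thesis by simp
qed

lemma riesz_set_sum_independent:
  assumes fin: "finite T" and sum0: "(\<Sum>t\<in>T. s (c t) (riesz_set_sum (M t))) = 0" and "t1 \<in> T"
    and sep: "\<And>N0. \<exists>N\<ge>N0. N \<in> M t1 \<and> (\<forall>t\<in>T - {t1}. N \<notin> M t)"
  shows "c t1 = 0"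
proof (rule ccontr)
  assume "c t1 \<noteq> 0"
  define b where "b i = (\<Sum>t\<in>T. c t * of_bool (i \<in> M t))" for i
  define K where "K = (\<Sum>t\<in>T. norm (c t))"
  have bK: "norm (b i) \<le> K" for i
    unfolding b_def K_def by (rule order_trans[OF norm_sum sum_mono]) (simp add: norm_mult)
  have S0: "(\<lambda>m. nq (\<Sum>i<m. s (b i) (riesz i))) \<longlonglongrightarrow> 0"
    unfolding b_def by (rule nq_riesz_lincomb_tendsto_zero[OF fin sum0])
  define c1 where "c1 = norm (c t1) powr q"
  define C where "C = 2 * (2 * K) powr q"
  have "0 < c1" using \<open>c t1 \<noteq> 0\<close> by (simp add: c1_def)
  have "(\<lambda>m. C * (1/2::real) ^ m) \<longlonglongrightarrow> 0"
    by (intro tendsto_mult_right_zero LIMSEQ_realpow_zero) auto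
  from order_tendstoD(2)[OF this \<open>0 < c1\<close>]
  obtain N0 where N0: "\<And>m. N0 \<le> m \<Longrightarrow> C * (1/2) ^ m < c1"
    unfolding eventually_sequentially by blast
  obtain N where N: "N \<ge> N0" "N \<in> M t1" "\<And>t. t \<in> T - {t1} \<Longrightarrow> N \<notin> M t"
    using sep[of N0] by blast
  have "b N = c t1"
    unfolding b_def using N(2,3) sum.remove[OF fin \<open>t1 \<in> T\<close>, of "\<lambda>t. c t * of_bool (N \<in> M t)"]
    by (simp add: sum.neutral)
  then have lower:
      "c1 * (1/2) ^ (N * N) - C * (1/2) ^ (Suc N * Suc N) \<le> nq (\<Sum>i<m. s (b i) (riesz i))"
    if "N < m" for m
    using nq_riesz_sum_lower[of b K, OF bK that] by (simp add: c1_def C_def)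
  have "c1 * (1/2) ^ (N * N) - C * (1/2) ^ (Suc N * Suc N) \<le> 0"
    using LIMSEQ_le_const[OF S0] lower by (meson Suc_le_eq)
  moreover have "C * (1/2::real) ^ (Suc N * Suc N) \<le> (1/2) ^ (N * N) * (C * (1/2) ^ N)"
  proof -
    have "(1/2::real) ^ (Suc N * Suc N) \<le> (1/2) ^ (N * N + N)" by (intro power_decreasing) auto
    also have "\<dots> = (1/2) ^ (N * N) * (1/2) ^ N" by (rule power_add)
    finally have "C * (1/2::real) ^ (Suc N * Suc N) \<le> C * ((1/2) ^ (N * N) * (1/2) ^ N)"
      by (rule mult_left_mono) (simp add: C_def)
    then show ?thesis by (simp add: mult_ac)
  qed
  moreover have "(1/2) ^ (N * N) * (C * (1/2) ^ N) < (1/2::real) ^ (N * N) * c1"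
    using N0[OF N(1)] by simp
  then have "(1/2) ^ (N * N) * (C * (1/2) ^ N) < c1 * (1/2::real) ^ (N * N)"
    by (simp only: mult.commute[of _ c1])
  ultimately show False by linarith
qed

lemma inj_riesz_set_sum_dyadic_codes: "inj (\<lambda>t. riesz_set_sum (dyadic_codes t))"
proof (rule injI, rule ccontr)
  fix t t' assume eq: "riesz_set_sum (dyadic_codes t) = riesz_set_sum (dyadic_codes t')"
    and "t \<noteq> t'"
  define c where "c u = (if u = t then (1::'a) else -1)" for u
  have "(\<Sum>u\<in>{t, t'}. s (c u) (riesz_set_sum (dyadic_codes u))) = 0"
    using \<open>t \<noteq> t'\<close> eq by (simp add: c_def)
  then have "c t = 0"
    using riesz_set_sum_independent[of "{t, t'}" c dyadic_codes t]
      dyadic_codes_separate[of "{t, t'}" t]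
    by simp
  then show False by (simp add: c_def)
qed

lemma independent_riesz_set_sum_dyadic_codes:
  "independent (range (\<lambda>t. riesz_set_sum (dyadic_codes t)))"
  (is "independent (range ?G)")
proof
  assume "dependent (range ?G)"
  then obtain S u v where S: "finite S" "S \<subseteq> range ?G" "(\<Sum>v\<in>S. s (u v) v) = 0"
    and v: "v \<in> S" "u v \<noteq> 0"
    unfolding dependent_explicit by blast
  define T where "T = ?G -` S"
  have "finite T" unfolding T_def using finite_vimageI[OF S(1) inj_riesz_set_sum_dyadic_codes] .
  have S_eq: "S = ?G ` T" unfolding T_def using S(2) by blast
  have "(\<Sum>t\<in>T. s (u (?G t)) (riesz_set_sum (dyadic_codes t))) = (\<Sum>v\<in>S. s (u v) v)"
    unfolding S_eq using inj_riesz_set_sum_dyadic_codes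
    by (simp add: sum.reindex inj_on_def inj_def)
  then have "(\<Sum>t\<in>T. s (u (?G t)) (riesz_set_sum (dyadic_codes t))) = 0" using S(3) by simp
  moreover obtain t1 where "t1 \<in> T" "?G t1 = v" using v(1) unfolding S_eq by blast
  ultimately have "u (?G t1) = 0"
    using riesz_set_sum_independent[of T "\<lambda>t. u (?G t)" dyadic_codes t1]
      dyadic_codes_separate[OF \<open>finite T\<close>] \<open>finite T\<close> by blast
  then show False using \<open>?G t1 = v\<close> v(2) by simp
qed

lemma independent_subset_eqpoll_reals: "\<exists>I. I \<subseteq> X \<and> independent I \<and> I \<approx> (UNIV :: real set)"
  using riesz_set_sum_in_X independent_riesz_set_sum_dyadic_codes
    inj_on_image_eqpoll_self[OF inj_riesz_set_sum_dyadic_codes]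
  by (intro exI[of _ "range (\<lambda>t. riesz_set_sum (dyadic_codes t))"]) auto

end

section \<open>Closures of countably spanned subspaces have at most continuum many points\<close>

context q_normed_space
begin

definition lincomb :: "(nat \<Rightarrow> 'b) \<Rightarrow> nat \<times> (nat \<Rightarrow> 'a) \<Rightarrow> 'b" where
  "lincomb d p = (\<Sum>i<fst p. s (snd p i) (d i))"

lemma lincomb_pad: "m \<le> p \<Longrightarrow> lincomb d (p, \<lambda>i. if i < m then c i else 0) = lincomb d (m, c)"
  unfolding lincomb_def
  using sum.atLeastLessThan_concat[of 0 m p "\<lambda>i. s (if i < m then c i else 0) (d i)"]
  by (simp add: atLeast0LessThan)

lemma span_range_subset_lincomb: "span (range d) \<subseteq> range (lincomb d)"
proof (rule span_minimal)
  show "range d \<subseteq> range (lincomb d)"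
  proof
    fix v assume "v \<in> range d"
    then obtain k where "v = d k" by blast
    moreover have "lincomb d (Suc k, \<lambda>i. if i = k then 1 else 0) =
        (\<Sum>i<Suc k. if i = k then d i else 0)"
      unfolding lincomb_def by (intro sum.cong) auto
    moreover have "(\<Sum>i<Suc k. if i = k then d i else 0) = d k" by simp
    ultimately show "v \<in> range (lincomb d)" by (metis rangeI)
  qed
  show "subspace (range (lincomb d))"
    unfolding subspace_def
  proof (intro conjI ballI allI)
    show "0 \<in> range (lincomb d)" using rangeI[of "lincomb d" "(0, \<lambda>_. 0)"]
      by (simp add: lincomb_def)
  next
    fix u v assume "u \<in> range (lincomb d)" "v \<in> range (lincomb d)"
    then obtain pu pv where u: "u = lincomb d pu" and v: "v = lincomb d pv" by blast
    obtain m c m' c' where "pu = (m, c)" "pv = (m', c')" by (cases pu, cases pv)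
    with u v have u: "u = lincomb d (m, c)" and v: "v = lincomb d (m', c')" by simp_all
    define p where "p = max m m'"
    have "u = lincomb d (p, \<lambda>i. if i < m then c i else 0)"
      unfolding u p_def by (simp add: lincomb_pad)
    moreover have "v = lincomb d (p, \<lambda>i. if i < m' then c' i else 0)"
      unfolding v p_def by (simp add: lincomb_pad)
    ultimately have
      "u + v = lincomb d (p, \<lambda>i. (if i < m then c i else 0) + (if i < m' then c' i else 0))"
      by (simp add: lincomb_def sum.distrib[symmetric] scale_left_distrib)
    then show "u + v \<in> range (lincomb d)" by (metis rangeI)
  next
    fix a v assume "v \<in> range (lincomb d)"
    then obtain p where "v = lincomb d p" by blast
    moreover obtain m c where "p = (m, c)" by (cases p)
    ultimately have v: "v = lincomb d (m, c)" by simp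
    have "s a v = lincomb d (m, \<lambda>i. a * c i)" unfolding v lincomb_def by (simp add: scale_sum_right)
    then show "s a v \<in> range (lincomb d)" by (metis rangeI)
  qed
qed

lemma lincomb_limit_if_in_closure_span:
  fixes d :: "nat \<Rightarrow> 'b"
  assumes "range d \<subseteq> E" "x \<in> qnorm_topology E n closure_of span (range d)"
  shows "\<exists>w. (\<lambda>m. nq (lincomb d (w m) - x)) \<longlonglongrightarrow> 0"
proof -
  from assms(2) have "x \<in> E \<and> (\<exists>y. range y \<subseteq> span (range d) \<and> (\<lambda>m. nq (y m - x)) \<longlonglongrightarrow> 0)"
    by (simp only: in_closure_of_iff_seq[OF span_subset_E[OF assms(1)]])
  then obtain y where y: "range y \<subseteq> span (range d)" "(\<lambda>m. nq (y m - x)) \<longlonglongrightarrow> 0"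
    by blast
  have "\<forall>m. \<exists>p. lincomb d p = y m"
  proof
    fix m
    have "y m \<in> range (lincomb d)" using y(1) span_range_subset_lincomb by blast
    then show "\<exists>p. lincomb d p = y m" by (metis rangeE)
  qed
  then obtain w where "\<And>m. lincomb d (w m) = y m" by metis
  then show ?thesis using y(2) by (intro exI[of _ w]) simp
qed

text \<open>A point of the closure is determined by a sequence of finite linear combinations
  converging to it.\<close>

lemma closure_span_lepoll:
  fixes d :: "nat \<Rightarrow> 'b"
  assumes dE: "range d \<subseteq> E"
  shows "qnorm_topology E n closure_of span (range d) \<lesssim> (UNIV :: (nat \<Rightarrow> nat \<times> (nat \<Rightarrow> 'a)) set)"
proof -
  let ?Y = "qnorm_topology E n closure_of span (range d)"
  have lincombE: "lincomb d p \<in> E" for p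
    unfolding lincomb_def using dE by (auto intro!: E_sum E_scale)
  define W where "W x = (SOME w. (\<lambda>m. nq (lincomb d (w m) - x)) \<longlonglongrightarrow> 0)" for x
  have W: "(\<lambda>m. nq (lincomb d (W x m) - x)) \<longlonglongrightarrow> 0" if "x \<in> ?Y" for x
    unfolding W_def by (rule someI_ex[OF lincomb_limit_if_in_closure_span[OF dE that]])
  have YE: "?Y \<subseteq> E" using closure_of_subset_topspace[of "qnorm_topology E n"] by simp
  have "inj_on W ?Y"
  proof (rule inj_onI)
    fix x x' assume x: "x \<in> ?Y" and x': "x' \<in> ?Y" and "W x = W x'"
    show "x = x'"
    proof (rule nq_limit_unique[of x x' "\<lambda>m. lincomb d (W x m)"])
      show "x \<in> E" "x' \<in> E" using x x' YE by auto
      show "range (\<lambda>m. lincomb d (W x m)) \<subseteq> E" using lincombE by blast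
      show "(\<lambda>m. nq (lincomb d (W x m) - x)) \<longlonglongrightarrow> 0" by (rule W[OF x])
      show "(\<lambda>m. nq (lincomb d (W x m) - x')) \<longlonglongrightarrow> 0" unfolding \<open>W x = W x'\<close> by (rule W[OF x'])
    qed
  qed
  then show ?thesis unfolding lepoll_def by blast
qed

end

text \<open>A sequence of finite coefficient families is coded by a set of naturals: the lengths
  under tag 0 and the codes \<open>\<kappa>\<close> of the coefficients under tag 1.\<close>

lemma coefficient_sequences_lepoll_reals:
  assumes "(UNIV :: 'a set) \<lesssim> (UNIV :: real set)"
  shows "(UNIV :: (nat \<Rightarrow> nat \<times> (nat \<Rightarrow> 'a)) set) \<lesssim> (UNIV :: real set)"
proof -
  have "(UNIV :: 'a set) \<lesssim> (UNIV :: nat set set)"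
    using lepoll_trans2[OF assms eqpoll_sym[OF nat_sets_eqpoll_reals]] .
  then obtain \<kappa> :: "'a \<Rightarrow> nat set" where \<kappa>: "inj \<kappa>"
    unfolding lepoll_def by blast
  define code :: "(nat \<Rightarrow> nat \<times> (nat \<Rightarrow> 'a)) \<Rightarrow> nat set" where
    "code F = range (\<lambda>i. prod_encode (0, prod_encode (i, fst (F i)))) \<union>
      {prod_encode (1, prod_encode (i, prod_encode (j, l))) | i j l. l \<in> \<kappa> (snd (F i) j)}" for F
  have "F = F'" if eq: "code F = code F'" for F F'
  proof
    fix i
    have "prod_encode (0, prod_encode (i, fst (F i))) \<in> code F" unfolding code_def by blast
    then have "prod_encode (0, prod_encode (i, fst (F i))) \<in> code F'" using eq by simp
    then have "fst (F i) = fst (F' i)" unfolding code_def by (auto simp: prod_encode_eq)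
    moreover have "snd (F i) = snd (F' i)"
    proof
      fix j
      have "l \<in> \<kappa> (snd (F i) j) \<longleftrightarrow> prod_encode (1, prod_encode (i, prod_encode (j, l))) \<in> code F"
        and "l \<in> \<kappa> (snd (F' i) j) \<longleftrightarrow> prod_encode (1, prod_encode (i, prod_encode (j, l))) \<in> code F'"
        for l unfolding code_def by (auto simp: prod_encode_eq)
      then have "\<kappa> (snd (F i) j) = \<kappa> (snd (F' i) j)" using eq by blast
      then show "snd (F i) j = snd (F' i) j" using \<kappa> by (simp add: inj_eq)
    qed
    ultimately show "F i = F' i" by (simp add: prod_eq_iff)
  qed
  then have "(UNIV :: (nat \<Rightarrow> nat \<times> (nat \<Rightarrow> 'a)) set) \<lesssim> (UNIV :: nat set set)"
    unfolding lepoll_def by (intro exI[of _ code]) (auto intro: inj_onI)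
  also have "(UNIV :: nat set set) \<approx> (UNIV :: real set)" by (rule nat_sets_eqpoll_reals)
  finally show ?thesis .
qed

lemma complex_lepoll_reals: "(UNIV :: complex set) \<lesssim> (UNIV :: real set)"
proof -
  have "inj (\<lambda>z. (Re z, Im z))" by (auto intro: injI simp: complex_eq_iff)
  then have "(UNIV :: complex set) \<lesssim> (UNIV :: (real \<times> real) set)"
    unfolding lepoll_def by auto
  also have "(UNIV :: (real \<times> real) set) \<approx> (UNIV :: real set)"
    using card_of_Times_same_infinite[of "UNIV :: real set"] infinite_UNIV_char_0
    by (simp add: eqpoll_iff_card_of_ordIso)
  finally show ?thesis .
qed

context q_banach_space
begin

lemma closure_span_has_basis_eqpoll_reals:
  fixes d e :: "nat \<Rightarrow> 'b"
  assumes card: "(UNIV :: 'a set) \<lesssim> (UNIV :: real set)" and "range d \<subseteq> E"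
    and e: "range e \<subseteq> qnorm_topology E n closure_of span (range d)" "\<And>k. e k \<notin> span (e ` {..<k})"
  defines "X \<equiv> qnorm_topology E n closure_of span (range d)"
  shows "\<exists>B\<subseteq>X. independent B \<and> span B = X \<and> B \<approx> (UNIV :: real set)"
proof -
  have "span (range d) \<subseteq> E" by (rule span_subset_E[OF \<open>range d \<subseteq> E\<close>])
  then have "subspace X" unfolding X_def by (rule subspace_closure_of[OF subspace_span])
  moreover have "X \<subseteq> E" "seq_closed X"
    using closedin_iff_seq_closed[of X] unfolding X_def by auto
  ultimately interpret infinite_dimensional_closed_subspace s q E n X e
    using e by unfold_locales (auto simp: X_def)
  obtain I where I: "I \<subseteq> X" "independent I" "I \<approx> (UNIV :: real set)"
    using independent_subset_eqpoll_reals by blast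
  obtain B where B: "I \<subseteq> B" "B \<subseteq> X" "independent B" "X \<subseteq> span B"
    using maximal_independent_subset_extend[OF I(1,2)] by blast
  have "span B = X" using B(2,4) span_minimal[OF B(2) subspace_X] by blast
  moreover have "B \<approx> (UNIV :: real set)"
  proof (rule lepoll_antisym)
    have "B \<lesssim> X" using B(2) by (rule subset_imp_lepoll)
    also have "X \<lesssim> (UNIV :: (nat \<Rightarrow> nat \<times> (nat \<Rightarrow> 'a)) set)"
      unfolding X_def by (rule closure_span_lepoll[OF \<open>range d \<subseteq> E\<close>])
    also have "\<dots> \<lesssim> (UNIV :: real set)" by (rule coefficient_sequences_lepoll_reals[OF card])
    finally show "B \<lesssim> (UNIV :: real set)" .
    have "(UNIV :: real set) \<approx> I" using I(3) by (rule eqpoll_sym)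
    also have "I \<lesssim> B" using B(1) by (rule subset_imp_lepoll)
    finally show "(UNIV :: real set) \<lesssim> B" .
  qed
  ultimately show ?thesis using B(2,3) by blast
qed

end

section \<open>Spreading operators and stable function spaces\<close>

lemma vector_space_seq_scale: "vector_space sW \<Longrightarrow> vector_space (seq_scale sW)"
  unfolding vector_space_def seq_scale_def by (auto simp: fun_eq_iff)

lemma vector_space_fun_scale: "vector_space s \<Longrightarrow> vector_space (fun_scale s)"
  unfolding vector_space_def fun_scale_def by (auto simp: fun_eq_iff)

lemma q_normed_space_spreading_qspace:
  fixes sW :: "'a::{real_normed_field,heine_borel} \<Rightarrow> 'w::ab_group_add \<Rightarrow> 'w"
  assumes "vector_space sW" "0 < q" "spreading_qspace sW q V nV"
  shows "q_normed_space (seq_scale sW) q V nV"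
proof -
  interpret vector_space "seq_scale sW" using assms(1) by (rule vector_space_seq_scale)
  show ?thesis
    using assms by unfold_locales
      (auto simp: spreading_qspace_def complete_qnorm_def linear_subspace_iff_subspace)
qed

lemma q_banach_space_stable_function_space:
  fixes sF :: "'a::{real_normed_field,heine_borel} \<Rightarrow> 'v::ab_group_add \<Rightarrow> 'v"
  assumes "vector_space sF" "0 < q" "stable_function_space sF q F nF A nA"
  shows "q_banach_space (fun_scale sF) q A nA"
proof -
  interpret vector_space "fun_scale sF" using assms(1) by (rule vector_space_fun_scale)
  show ?thesis
    using assms
    by unfold_locales
      (auto simp: stable_function_space_def complete_qnorm_def linear_subspace_iff_subspace)
qed

lemma closedin_coincidence_set:
  assumes "Hausdorff_space Y" "topspace T = A" "A \<subseteq> topspace (product_topology (\<lambda>_. Y) UNIV)"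
    and finer: "\<And>U. openin (subtopology (product_topology (\<lambda>_. Y) UNIV) A) U \<Longrightarrow> openin T U"
  shows "closedin T {g \<in> A. g \<omega>1 = g \<omega>2}"
proof -
  let ?P = "product_topology (\<lambda>_. Y) UNIV"
  have "closedin ?P {g \<in> topspace ?P. g \<omega>1 = g \<omega>2}"
    using assms(1) continuous_map_product_projection[of _ UNIV "\<lambda>_. Y"]
    by (intro closedin_continuous_maps_eq) auto
  then have "closedin (subtopology ?P A) ({g \<in> topspace ?P. g \<omega>1 = g \<omega>2} \<inter> A)"
    unfolding closedin_subtopology by blast
  moreover have "{g \<in> topspace ?P. g \<omega>1 = g \<omega>2} \<inter> A = {g \<in> A. g \<omega>1 = g \<omega>2}"
    using assms(3) by blast
  moreover have "topspace (subtopology ?P A) = A" using assms(3) by auto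
  ultimately show ?thesis
    using finer assms(2) unfolding closedin_def by auto
qed

lemma closedin_coincidence_set_stable_function_space:
  fixes sF :: "'a::{real_normed_field,heine_borel} \<Rightarrow> 'v::ab_group_add \<Rightarrow> 'v"
  assumes "q_normed_space sF q F nF" "stable_function_space sF q F nF A nA"
  shows "closedin (qnorm_topology A nA) {g \<in> A. g \<omega>1 = g \<omega>2}"
  using assms(2) q_normed_space.Hausdorff_space_qnorm_topology[OF assms(1)]
  by (intro closedin_coincidence_set) (auto simp: stable_function_space_def PiE_UNIV_domain)

definition block :: "nat \<Rightarrow> nat set" where "block k = range (\<lambda>i. prod_encode (k, i))"

lemma infinite_block: "infinite (block k)"
  unfolding block_def by (rule range_inj_infinite) (simp add: inj_on_def)

lemma block_disjoint: "k \<noteq> m \<Longrightarrow> p \<in> block k \<Longrightarrow> p \<notin> block m"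
  unfolding block_def by auto

text \<open>\<open>spread k a\<close> places the terms of \<open>a\<close>, in order, on the \<open>k\<close>-th block and is zero
  elsewhere; by the spreading property it does not increase the norm.\<close>

definition spread :: "nat \<Rightarrow> (nat \<Rightarrow> 'w::zero) \<Rightarrow> nat \<Rightarrow> 'w" where
  "spread k a p = (if p \<in> block k then a (inv (enumerate (block k)) p) else 0)"

lemma spread_enumerate: "spread k a (enumerate (block k) i) = a i"
  unfolding spread_def
  using enumerate_in_set[OF infinite_block] inv_f_f[OF inj_enumerate[OF infinite_block]] by simp

lemma spread_outside: "p \<notin> block k \<Longrightarrow> spread k a p = 0"
  unfolding spread_def by simp

lemma bounded_op_spread:
  fixes sW :: "'a::real_normed_field \<Rightarrow> 'w::ab_group_add \<Rightarrow> 'w"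
  assumes "vector_space sW" "spreading_qspace sW q V nV"
  shows "bounded_op (seq_scale sW) V nV (spread k)"
proof -
  have spread_V: "spread k a \<in> V \<and> nV (spread k a) \<le> nV a" if "a \<in> V" for a
    using assms(2) that infinite_block[of k] spread_enumerate[of k a] spread_outside[of _ k a]
    unfolding spreading_qspace_def by blast
  have "sW c 0 = 0" for c
    using assms(1) by (simp add: module.scale_zero_right module_iff_vector_space)
  then have "spread k (seq_scale sW c a) = seq_scale sW c (spread k a)" for c a
    unfolding spread_def seq_scale_def by (auto simp: fun_eq_iff)
  moreover have "spread k (a + b) = spread k a + spread k b" for a b :: "nat \<Rightarrow> 'w"
    unfolding spread_def by (auto simp: fun_eq_iff)
  ultimately show ?thesis
    unfolding bounded_op_def using spread_V by (intro conjI ballI allI exI[of _ 1]) auto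
qed

lemma spread_comp_notin_span:
  fixes sW :: "'a::field \<Rightarrow> 'w::ab_group_add \<Rightarrow> 'w" and h :: "'o \<Rightarrow> nat \<Rightarrow> 'w"
  assumes "vector_space sW" "h \<noteq> 0"
  shows "spread k \<circ> h \<notin> module.span (fun_scale (seq_scale sW)) ((\<lambda>m. spread m \<circ> h) ` {..<k})"
proof -
  interpret F: vector_space "fun_scale (seq_scale sW)"
    using assms(1) by (intro vector_space_fun_scale vector_space_seq_scale)
  obtain \<omega>0 j0 where "h \<omega>0 j0 \<noteq> 0" using assms(2) by (auto simp: fun_eq_iff)
  define p where "p = enumerate (block k) j0"
  have "sW c 0 = 0" for c
    using assms(1) by (simp add: module.scale_zero_right module_iff_vector_space)
  then have "F.subspace {g. g \<omega>0 p = 0}"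
    unfolding F.subspace_def by (auto simp: fun_scale_def seq_scale_def)
  moreover have "(\<lambda>m. spread m \<circ> h) ` {..<k} \<subseteq> {g. g \<omega>0 p = 0}"
    using enumerate_in_set[OF infinite_block, of k j0] block_disjoint[of k]
    by (auto simp: p_def spread_outside)
  ultimately have "F.span ((\<lambda>m. spread m \<circ> h) ` {..<k}) \<subseteq> {g. g \<omega>0 p = 0}"
    by (rule F.span_minimal[rotated])
  moreover have "(spread k \<circ> h) \<omega>0 p \<noteq> 0"
    using \<open>h \<omega>0 j0 \<noteq> 0\<close> by (simp add: p_def spread_enumerate)
  ultimately show ?thesis by blast
qed

lemma subspace_coincidence_set:
  fixes sF :: "'a::field \<Rightarrow> 'v::ab_group_add \<Rightarrow> 'v" and A :: "('o \<Rightarrow> 'v) set"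
  assumes "vector_space sF" "module.subspace (fun_scale sF) A"
  shows "module.subspace (fun_scale sF) {g \<in> A. g \<omega>1 = g \<omega>2}"
proof -
  have "module (fun_scale sF :: 'a \<Rightarrow> ('o \<Rightarrow> 'v) \<Rightarrow> 'o \<Rightarrow> 'v)"
    using vector_space_fun_scale[OF assms(1)] by (simp add: module_iff_vector_space)
  then show ?thesis
    using assms(2) by (auto simp: module.subspace_def fun_scale_def)
qed

lemma non_injective_in_spaceable_subspace:
  fixes sW :: "'a::{real_normed_field,heine_borel} \<Rightarrow> 'w::ab_group_add \<Rightarrow> 'w"
    and A :: "('o \<Rightarrow> nat \<Rightarrow> 'w) set"
  assumes card: "(UNIV :: 'a set) \<lesssim> (UNIV :: real set)" and vs: "vector_space sW" and "0 < q"
    and sp: "spreading_qspace sW q V nV" and st: "stable_function_space (seq_scale sW) q V nV A nA"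
    and h: "h \<in> A" "h \<noteq> 0" "h \<omega>1 = h \<omega>2" "\<omega>1 \<noteq> \<omega>2"
  defines "s \<equiv> fun_scale (seq_scale sW)"
  shows "\<exists>X. linear_subspace s X \<and> X \<subseteq> A \<and> closedin (qnorm_topology A nA) X \<and> h \<in> X \<and>
    X \<subseteq> {f \<in> A. \<not> inj f} \<and>
    (\<exists>B. B \<subseteq> X \<and> \<not> module.dependent s B \<and> module.span s B = X \<and> B \<approx> (UNIV :: real set))"
proof -
  interpret V: q_normed_space "seq_scale sW" q V nV
    using vs \<open>0 < q\<close> sp by (rule q_normed_space_spreading_qspace)
  interpret A: q_banach_space s q A nA
    unfolding s_def using vector_space_seq_scale[OF vs] \<open>0 < q\<close> st
    by (rule q_banach_space_stable_function_space)
  define d where "d = case_nat h (\<lambda>k. spread k \<circ> h)"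
  define X where "X = qnorm_topology A nA closure_of A.span (range d)"
  have "spread k \<circ> h \<in> A" for k
    using st h(1) bounded_op_spread[OF vs sp] unfolding stable_function_space_def by blast
  then have dA: "range d \<subseteq> A" using h(1) by (auto simp: d_def split: nat.splits)
  then have span_X: "A.span (range d) \<subseteq> X"
    unfolding X_def by (intro closure_of_subset) (simp add: A.span_subset_E)
  have "spread k \<circ> h \<in> X" for k
  proof -
    have "d (Suc k) \<in> X" using subsetD[OF span_X A.span_base[OF rangeI[of d "Suc k"]]] .
    then show ?thesis by (simp add: d_def)
  qed
  then have "range (\<lambda>k. spread k \<circ> h) \<subseteq> X" by blast
  then obtain B where B: "B \<subseteq> X" "A.independent B" "A.span B = X" "B \<approx> (UNIV :: real set)"
    using A.closure_span_has_basis_eqpoll_reals[OF card dA] spread_comp_notin_span[OF vs h(2)]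
    unfolding X_def s_def by blast
  have "closedin (qnorm_topology A nA) {g \<in> A. g \<omega>1 = g \<omega>2}"
    using V.q_normed_space_axioms st by (rule closedin_coincidence_set_stable_function_space)
  moreover have "A.span (range d) \<subseteq> {g \<in> A. g \<omega>1 = g \<omega>2}"
    using dA h(3)
      subspace_coincidence_set[OF vector_space_seq_scale[OF vs] A.subspace_E[unfolded s_def]]
    by (intro A.span_minimal) (auto simp: s_def d_def split: nat.splits)
  ultimately have "X \<subseteq> {g \<in> A. g \<omega>1 = g \<omega>2}" unfolding X_def by (rule closure_of_minimal[rotated])
  then have "X \<subseteq> {f \<in> A. \<not> inj f}" using h(4) by (auto simp: inj_def)
  moreover have "h \<in> X"
  proof -
    have "d 0 \<in> X" using subsetD[OF span_X A.span_base[OF rangeI[of d 0]]] .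
    then show ?thesis by (simp add: d_def)
  qed
  moreover have "A.subspace X"
    unfolding X_def by (rule A.subspace_closure_of[OF A.subspace_span A.span_subset_E[OF dA]])
  moreover have "closedin (qnorm_topology A nA) X" unfolding X_def by simp
  ultimately show ?thesis
    using B closedin_subset[of "qnorm_topology A nA" X]
      by (auto simp: A.linear_subspace_iff_subspace)
qed

lemma non_injective_trivial_or_pointwise_spaceable:
  fixes sW :: "'a::{real_normed_field,heine_borel} \<Rightarrow> 'w::ab_group_add \<Rightarrow> 'w"
    and A :: "('o \<Rightarrow> nat \<Rightarrow> 'w) set"
  assumes "(UNIV :: 'a set) \<lesssim> (UNIV :: real set)" "vector_space sW" "0 < q"
    and "spreading_qspace sW q V nV" "stable_function_space (seq_scale sW) q V nV A nA"
  shows "{f \<in> A. \<not> inj f} = {0} \<or>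
    pointwise_spaceable (fun_scale (seq_scale sW)) A nA {f \<in> A. \<not> inj f}"
proof (cases "{f \<in> A. \<not> inj f} = {0}")
  case False
  let ?N = "{f \<in> A. \<not> inj f}"
  have "?N \<noteq> {0}" using False .
  have "pointwise_spaceable (fun_scale (seq_scale sW)) A nA ?N"
    unfolding pointwise_spaceable_def
  proof
    fix f assume "f \<in> ?N"
    then obtain h where h: "h \<in> ?N" "h \<noteq> 0" "f = 0 \<or> f = h"
      using \<open>?N \<noteq> {0}\<close> by blast
    then obtain \<omega>1 \<omega>2 where \<omega>: "h \<omega>1 = h \<omega>2" "\<omega>1 \<noteq> \<omega>2" unfolding inj_def by blast
    have "h \<in> A" using h(1) by simp
    obtain X where X: "linear_subspace (fun_scale (seq_scale sW)) X" "X \<subseteq> A"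
      "closedin (qnorm_topology A nA) X" "h \<in> X" "X \<subseteq> ?N"
      "\<exists>B. B \<subseteq> X \<and> \<not> module.dependent (fun_scale (seq_scale sW)) B \<and>
         module.span (fun_scale (seq_scale sW)) B = X \<and> B \<approx> (UNIV :: real set)"
      using non_injective_in_spaceable_subspace[OF assms \<open>h \<in> A\<close> h(2) \<omega>] by blast
    moreover have "f \<in> X" using h(3) X(1,4) by (auto simp: linear_subspace_def)
    ultimately show "\<exists>X. linear_subspace (fun_scale (seq_scale sW)) X \<and> X \<subseteq> A \<and>
        closedin (qnorm_topology A nA) X \<and> f \<in> X \<and> X \<subseteq> ?N \<and>
        (\<exists>B. B \<subseteq> X \<and> \<not> module.dependent (fun_scale (seq_scale sW)) B \<and>
          module.span (fun_scale (seq_scale sW)) B = X \<and> B \<approx> (UNIV :: real set))"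
      by blast
  qed
  then show ?thesis by (rule disjI2)
qed simp

theorem theorem3p3:
  shows "(\<forall>(sW :: real \<Rightarrow> 'w::ab_group_add \<Rightarrow> 'w) (q::real) (V :: (nat \<Rightarrow> 'w) set) nV
            (A :: ('o \<Rightarrow> nat \<Rightarrow> 'w) set) nA.
            vector_space sW \<and> 0 < q \<and> q \<le> 1 \<and> V \<noteq> {0} \<and> spreading_qspace sW q V nV \<and>
            stable_function_space (seq_scale sW) q V nV A nA \<longrightarrow>
            {f \<in> A. \<not> inj f} = {0} \<or>
            pointwise_spaceable (fun_scale (seq_scale sW)) A nA {f \<in> A. \<not> inj f})
       \<and> (\<forall>(sW :: complex \<Rightarrow> 'w::ab_group_add \<Rightarrow> 'w) (q::real) (V :: (nat \<Rightarrow> 'w) set) nV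
            (A :: ('o \<Rightarrow> nat \<Rightarrow> 'w) set) nA.
            vector_space sW \<and> 0 < q \<and> q \<le> 1 \<and> V \<noteq> {0} \<and> spreading_qspace sW q V nV \<and>
            stable_function_space (seq_scale sW) q V nV A nA \<longrightarrow>
            {f \<in> A. \<not> inj f} = {0} \<or>
            pointwise_spaceable (fun_scale (seq_scale sW)) A nA {f \<in> A. \<not> inj f})"
proof (intro conjI allI impI)
  fix sW :: "real \<Rightarrow> 'w \<Rightarrow> 'w" and q V nV and A :: "('o \<Rightarrow> nat \<Rightarrow> 'w) set" and nA
  assume "vector_space sW \<and> 0 < q \<and> q \<le> 1 \<and> V \<noteq> {0} \<and> spreading_qspace sW q V nV \<and>
    stable_function_space (seq_scale sW) q V nV A nA"
  then show "{f \<in> A. \<not> inj f} = {0} \<or>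
      pointwise_spaceable (fun_scale (seq_scale sW)) A nA {f \<in> A. \<not> inj f}"
    by (elim conjE)
      (rule non_injective_trivial_or_pointwise_spaceable[OF lepoll_refl]; assumption)
next
  fix sW :: "complex \<Rightarrow> 'w \<Rightarrow> 'w" and q V nV and A :: "('o \<Rightarrow> nat \<Rightarrow> 'w) set" and nA
  assume "vector_space sW \<and> 0 < q \<and> q \<le> 1 \<and> V \<noteq> {0} \<and> spreading_qspace sW q V nV \<and>
    stable_function_space (seq_scale sW) q V nV A nA"
  then show "{f \<in> A. \<not> inj f} = {0} \<or>
      pointwise_spaceable (fun_scale (seq_scale sW)) A nA {f \<in> A. \<not> inj f}"
    by (elim conjE)
      (rule non_injective_trivial_or_pointwise_spaceable[OF complex_lepoll_reals]; assumption)
qed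

end
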